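(* Suppose $u$ and $v$ are vertices of $G$ such that $u$ is an ancestor or a descendant of $v$ in $T$. Then, when routing from $u$ to $v$, the routing algorithm reaches $v$ after traversing $O(\log n)$ edges.
   Context: Let $T$ be a rooted tree on $n$ vertices with positive edge weights; $\delta_T(a,b)$ is the weight of the path in $T$ from $a$ to $b$. Ancestor/descendant refer to $T$, and a vertex counts as its own ancestor and descendant; "deepest"/"highest" refer to depth in $T$. $T_v$ is the subtree of $T$ rooted at $v$. For every non-leaf vertex $v$ fix a child $c_1(v)$ with $|T_{c_1(v)}|$ maximal; edges $(v,c_1(v))$ are leftmost. A subtree $R$ of $T$ is rooted at its vertex closest to the root, $rt(R)$, and inherits the leftmost labelling; $R_v$ is the subtree of $R$ rooted at $v$. $P_R(v)$ is the longest downward path from $v$ in $R$ using only leftmost edges, with last vertex $l(v)$; $l(R):=l(rt(R))$. A vertex $v$ of $R$ is $d$-balanced if $|R_{c_1(v)}|\le |R|-d$ (with $|R_{c_1(v)}|=0$ if $c_1(v)$ is undefined or not in $R$); $b_d(v)$ is the first $d$-balanced vertex on $P_R(v)$, or NULL. $CV(R,d)=\emptyset$ if $b_d(rt(R))$ is NULL, else $\{b\}\cup\bigcup_w CV(R_w,d)$ with $b=b_d(rt(R))$ and $w$ ranging over children of $b$ in $R$. Fix an integer $k\ge4$; for a subtree $R$ with $m$ vertices, $C_R=V(R)$ if $k\ge m/2-1$, else $C_R=CV(R,m/k)\cup\{l(R),rt(R)\}$. Canonical subtrees: $T$ is canonical; if $R$ is canonical, each component of $R$ minus $C_R$ is canonical.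 Each vertex $v$ lies in $C_R$ for exactly one canonical $R$, denoted $T^v$. The spanner $G$ has vertex set $V(T)$ and edges: all edges of $T$, and all pairs of distinct vertices of $C_R$ for every canonical $R$; edge $(a,b)$ has weight $\delta_T(a,b)$. Routing algorithm from current vertex $u$ to destination $v$, repeated until $v$ is reached: Case 0: if $v$ is adjacent to $u$, move to $v$. Case 1: $u$ is an ancestor of $v$; let $X$ be the vertices of $C_{T^u}$ that are ancestors of $v$, $x$ the deepest; move to $x$, then to the child of $x$ that is an ancestor of $v$. Case 2: $u$ is a descendant of $v$; let $X$ be the vertices of $C_{T^u}$ that are descendants of $v$ and ancestors of $u$, $x$ the highest; move to $x$, then to the parent of $x$. Case 3: $u$ is neither; let $X$ be the vertices of $C_{T^u}$ that are ancestors of $v$ but not of $u$, and $Y$ those that are ancestors of $u$ but not of $v$, $y$ the highest vertex of $Y$. Case 3 a): $X=\emptyset$: move to $y$, then to the parent of $y$. Case 3 b): $X\neq\emptyset$: with $x$ the deepest vertex of $X$ and $x'$ the child of $x$ that is an ancestor of $v$, move to $x$, then to $x'$. (Moving to the current vertex means staying.) *)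

theory Defs
  imports Main "HOL.Transcendental"
begin

text \<open>A rooted tree on a finite vertex set of naturals, given by a parent function,
  together with a fixed choice of a heaviest child (the leftmost child) for each
  non-leaf vertex.\<close>

record rtree =
  verts :: "nat set"
  root :: nat
  parent :: "nat \<Rightarrow> nat"
  lc :: "nat \<Rightarrow> nat"

inductive anc :: "rtree \<Rightarrow> nat \<Rightarrow> nat \<Rightarrow> bool" for T where
  anc_refl: "v \<in> verts T \<Longrightarrow> anc T v v"
| anc_step: "w \<in> verts T \<Longrightarrow> w \<noteq> root T \<Longrightarrow> anc T x (parent T w) \<Longrightarrow> anc T x w"

definition is_tree :: "rtree \<Rightarrow> bool" where
  "is_tree T \<longleftrightarrow> finite (verts T) \<and> root T \<in> verts T
     \<and> (\<forall>v \<in> verts T - {root T}. parent T v \<in> verts T)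
     \<and> (\<forall>v \<in> verts T. anc T (root T) v)"

definition children :: "rtree \<Rightarrow> nat \<Rightarrow> nat set" where
  "children T x = {w \<in> verts T. w \<noteq> root T \<and> parent T w = x}"

definition Tsub :: "rtree \<Rightarrow> nat \<Rightarrow> nat set" where
  "Tsub T x = {w. anc T x w}"

definition valid_lc :: "rtree \<Rightarrow> bool" where
  "valid_lc T \<longleftrightarrow> (\<forall>v \<in> verts T. children T v \<noteq> {} \<longrightarrow>
      lc T v \<in> children T v \<and>
      (\<forall>w \<in> children T v. card (Tsub T w) \<le> card (Tsub T (lc T v))))"

definition tadj :: "rtree \<Rightarrow> nat \<Rightarrow> nat \<Rightarrow> bool" where
  "tadj T a b \<longleftrightarrow> a \<in> verts T \<and> b \<in> verts T \<and>
     ((a \<noteq> root T \<and> parent T a = b) \<or> (b \<noteq> root T \<and> parent T b = a))"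

text \<open>Subtrees R are represented by their vertex sets (connected subsets of V(T)).\<close>
definition rt :: "rtree \<Rightarrow> nat set \<Rightarrow> nat" where
  "rt T R = (THE x. x \<in> R \<and> (x = root T \<or> parent T x \<notin> R))"

definition Rsub :: "rtree \<Rightarrow> nat set \<Rightarrow> nat \<Rightarrow> nat set" where
  "Rsub T R v = {w \<in> R. anc T v w}"

definition has_lc :: "rtree \<Rightarrow> nat set \<Rightarrow> nat \<Rightarrow> bool" where
  "has_lc T R w \<longleftrightarrow> children T w \<noteq> {} \<and> lc T w \<in> R"

definition lcsize :: "rtree \<Rightarrow> nat set \<Rightarrow> nat \<Rightarrow> nat" where
  "lcsize T R w = (if has_lc T R w then card (Rsub T R (lc T w)) else 0)"

definition balanced :: "rtree \<Rightarrow> nat set \<Rightarrow> real \<Rightarrow> nat \<Rightarrow> bool" where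
  "balanced T R d w \<longleftrightarrow> real (lcsize T R w) \<le> real (card R) - d"

inductive onP :: "rtree \<Rightarrow> nat set \<Rightarrow> nat \<Rightarrow> nat \<Rightarrow> bool" for T R v where
  onP_start: "v \<in> R \<Longrightarrow> onP T R v v"
| onP_next: "onP T R v w \<Longrightarrow> has_lc T R w \<Longrightarrow> onP T R v (lc T w)"

definition lend :: "rtree \<Rightarrow> nat set \<Rightarrow> nat \<Rightarrow> nat" where
  "lend T R v = (THE w. onP T R v w \<and> \<not> has_lc T R w)"

definition bfirst :: "rtree \<Rightarrow> nat set \<Rightarrow> real \<Rightarrow> nat \<Rightarrow> nat option" where
  "bfirst T R d v =
    (if \<exists>w. onP T R v w \<and> balanced T R d w
     then Some (THE w. onP T R v w \<and> balanced T R d w \<and>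
                  (\<forall>w'. onP T R v w' \<and> balanced T R d w' \<longrightarrow> anc T w w'))
     else None)"

inductive cv :: "rtree \<Rightarrow> real \<Rightarrow> nat set \<Rightarrow> nat \<Rightarrow> bool" for T d where
  cv_here: "bfirst T R d (rt T R) = Some b \<Longrightarrow> cv T d R b"
| cv_rec: "bfirst T R d (rt T R) = Some b \<Longrightarrow> w \<in> R \<Longrightarrow> w \<in> children T b \<Longrightarrow>
           cv T d (Rsub T R w) x \<Longrightarrow> cv T d R x"

definition Cset :: "rtree \<Rightarrow> nat \<Rightarrow> nat set \<Rightarrow> nat set" where
  "Cset T k R = (let m = card R in
     if real k \<ge> real m / 2 - 1 then R
     else {x. cv T (real m / real k) R x} \<union> {lend T R (rt T R), rt T R})"

definition comp :: "rtree \<Rightarrow> nat set \<Rightarrow> nat \<Rightarrow> nat set" where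
  "comp T A x = {y. (\<lambda>a b. a \<in> A \<and> b \<in> A \<and> tadj T a b)\<^sup>*\<^sup>* x y}"

inductive canon :: "rtree \<Rightarrow> nat \<Rightarrow> nat set \<Rightarrow> bool" for T k where
  canon_T: "canon T k (verts T)"
| canon_comp: "canon T k R \<Longrightarrow> x \<in> R - Cset T k R \<Longrightarrow> canon T k (comp T (R - Cset T k R) x)"

definition Tof :: "rtree \<Rightarrow> nat \<Rightarrow> nat \<Rightarrow> nat set" where
  "Tof T k u = (THE R. canon T k R \<and> u \<in> Cset T k R)"

definition Gadj :: "rtree \<Rightarrow> nat \<Rightarrow> nat \<Rightarrow> nat \<Rightarrow> bool" where
  "Gadj T k a b \<longleftrightarrow> a \<noteq> b \<and>
     (tadj T a b \<or> (\<exists>R. canon T k R \<and> a \<in> Cset T k R \<and> b \<in> Cset T k R))"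

definition deepest :: "rtree \<Rightarrow> nat set \<Rightarrow> nat" where
  "deepest T X = (THE x. x \<in> X \<and> (\<forall>y \<in> X. anc T y x))"

definition highest :: "rtree \<Rightarrow> nat set \<Rightarrow> nat" where
  "highest T X = (THE x. x \<in> X \<and> (\<forall>y \<in> X. anc T x y))"

definition child_toward :: "rtree \<Rightarrow> nat \<Rightarrow> nat \<Rightarrow> nat" where
  "child_toward T x v = (THE c. c \<in> children T x \<and> anc T c v)"

text \<open>One iteration of the routing algorithm from current vertex u towards v:
  returns (first vertex moved to, second vertex moved to).\<close>
definition route_step :: "rtree \<Rightarrow> nat \<Rightarrow> nat \<Rightarrow> nat \<Rightarrow> nat \<times> nat" where
  "route_step T k v u =
    (if u = v then (u, u)
     else if Gadj T k u v then (v, v)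
     else let C = Cset T k (Tof T k u) in
       if anc T u v then
         (let x = deepest T {x \<in> C. anc T x v} in (x, child_toward T x v))
       else if anc T v u then
         (let x = highest T {x \<in> C. anc T v x \<and> anc T x u} in (x, parent T x))
       else
         (let X = {x \<in> C. anc T x v \<and> \<not> anc T x u};
              Y = {y \<in> C. anc T y u \<and> \<not> anc T y v} in
          if X = {} then (let y = highest T Y in (y, parent T y))
          else (let x = deepest T X in (x, child_toward T x v))))"

text \<open>Number of edges traversed in one iteration (moving to the current vertex is staying).\<close>
definition step_cost :: "rtree \<Rightarrow> nat \<Rightarrow> nat \<Rightarrow> nat \<Rightarrow> nat" where
  "step_cost T k v u = (case route_step T k v u of (x, y) \<Rightarrow>
     (if x \<noteq> u then 1 else 0) + (if y \<noteq> x then 1 else 0))"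

definition route_pos :: "rtree \<Rightarrow> nat \<Rightarrow> nat \<Rightarrow> nat \<Rightarrow> nat \<Rightarrow> nat" where
  "route_pos T k u v i = ((\<lambda>w. snd (route_step T k v w)) ^^ i) u"

end

theory Submission
  imports Defs
begin

(*
  Every vertex w lies in the C-set of exactly one canonical subtree T^w, and canonical subtrees
  form a laminar family: a canonical subtree properly inside another one, S, lies in a single
  component of S - C_S. Removing CV(S,d) leaves components with fewer than d vertices, and C_S
  contains CV(S,|S|/k), so a proper canonical subtree of S has fewer than |S|/k vertices.

  An iteration of the routing algorithm from w towards an ancestor or descendant v jumps to the
  deepest (resp. highest) vertex of C_{T^w} on the way to v and then follows one tree edge. If v
  is outside T^w, that edge leaves T^w through its C-set, and the canonical subtree of the new
  vertex contains T^w, so it is more than k times larger. If v is inside T^w, the new vertex is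
  in the C-set of the component of T^w - C_{T^w} containing v (as its root, or as a vertex with
  a child outside it), so its canonical subtree is that component: more than k times smaller and
  still containing v. Hence each phase takes at most log_k n iterations of at most two edges.
*)

section \<open>Ancestry in a rooted tree\<close>

lemma anc_in_verts: "anc T x w \<Longrightarrow> x \<in> verts T \<and> w \<in> verts T"
  by (induction rule: anc.induct) auto

lemma anc_trans: "anc T a b \<Longrightarrow> anc T b c \<Longrightarrow> anc T a c"
  by (rotate_tac, induction rule: anc.induct) (auto intro: anc.intros)

lemma anc_properD: "anc T a w \<Longrightarrow> a \<noteq> w \<Longrightarrow> w \<noteq> root T \<and> anc T a (parent T w)"
  by (auto elim: anc.cases)

lemma anc_root_eq: "anc T a (root T) \<Longrightarrow> a = root T"
  by (auto elim: anc.cases)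

lemma anc_linear: "anc T a w \<Longrightarrow> anc T b w \<Longrightarrow> anc T a b \<or> anc T b a"
proof (induction arbitrary: b rule: anc.induct)
  case (anc_step w x)
  then show ?case
    using anc_properD by (metis anc.anc_step)
qed auto

lemma anc_funpow:
  "anc T x w \<Longrightarrow> \<exists>n. (parent T ^^ n) w = x \<and> (\<forall>i<n. (parent T ^^ i) w \<noteq> root T)"
proof (induction rule: anc.induct)
  case (anc_refl v)
  show ?case by (intro exI[of _ 0]) auto
next
  case (anc_step w x)
  then obtain m where "(parent T ^^ m) (parent T w) = x"
    and "\<forall>i<m. (parent T ^^ i) (parent T w) \<noteq> root T" by blast
  then show ?case using \<open>w \<noteq> root T\<close>
    by (intro exI[of _ "Suc m"]) (auto simp: funpow_Suc_right less_Suc_eq_0_disj simp del: funpow.simps)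
qed

definition depth :: "rtree \<Rightarrow> nat \<Rightarrow> nat" where
  "depth T w = (LEAST n. (parent T ^^ n) w = root T)"

lemma depth_eqI:
  "(parent T ^^ h) w = root T \<Longrightarrow> \<forall>i<h. (parent T ^^ i) w \<noteq> root T \<Longrightarrow> depth T w = h"
  unfolding depth_def by (rule Least_equality) (auto intro: leI)

locale tree =
  fixes T :: rtree
  assumes tree: "is_tree T"
begin

lemma finite_verts: "finite (verts T)"
  using tree by (simp add: is_tree_def)

lemma finite_subset_verts: "R \<subseteq> verts T \<Longrightarrow> finite R"
  using finite_verts finite_subset by blast

lemma root_in_verts: "root T \<in> verts T"
  using tree by (simp add: is_tree_def)

lemma parent_in_verts: "v \<in> verts T \<Longrightarrow> v \<noteq> root T \<Longrightarrow> parent T v \<in> verts T"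
  using tree by (simp add: is_tree_def)

lemma anc_root: "v \<in> verts T \<Longrightarrow> anc T (root T) v"
  using tree by (simp add: is_tree_def)

lemma anc_parent: "w \<in> verts T \<Longrightarrow> w \<noteq> root T \<Longrightarrow> anc T (parent T w) w"
  using parent_in_verts by (auto intro: anc.intros)

lemma depth_parent:
  assumes "w \<in> verts T" "w \<noteq> root T"
  shows "depth T w = Suc (depth T (parent T w))"
proof -
  obtain h where h: "(parent T ^^ h) w = root T" "\<forall>i<h. (parent T ^^ i) w \<noteq> root T"
    using anc_funpow[OF anc_root[OF assms(1)]] by blast
  then obtain g where g: "h = Suc g"
    using assms(2) by (cases h) auto
  have "depth T (parent T w) = g"
    using h by (intro depth_eqI) (auto simp: g funpow_Suc_right simp del: funpow.simps)
  then show ?thesis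
    using depth_eqI[OF h] g by simp
qed

lemma anc_depth_le: "anc T x w \<Longrightarrow> depth T x \<le> depth T w"
  by (induction rule: anc.induct) (auto simp: depth_parent)

lemma anc_depth_less: "anc T x w \<Longrightarrow> x \<noteq> w \<Longrightarrow> depth T x < depth T w"
  using anc_properD anc_depth_le anc_in_verts depth_parent by (metis le_imp_less_Suc)

lemma anc_antisym: "anc T x w \<Longrightarrow> anc T w x \<Longrightarrow> x = w"
  using anc_depth_less anc_depth_le by (meson leD)

lemma parent_neq: "w \<in> verts T \<Longrightarrow> w \<noteq> root T \<Longrightarrow> parent T w \<noteq> w"
  using depth_parent by (metis n_not_Suc_n)

lemma not_anc_parent: "w \<in> verts T \<Longrightarrow> w \<noteq> root T \<Longrightarrow> \<not> anc T w (parent T w)"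
  using anc_antisym anc_parent parent_neq by blast

end

section \<open>Components and rooted subtrees\<close>

lemma tadj_sym: "tadj T a b \<Longrightarrow> tadj T b a"
  unfolding tadj_def by auto

lemma comp_refl: "x \<in> comp T A x"
  unfolding comp_def by auto

lemma comp_induct [consumes 1, case_names refl step]:
  assumes "y \<in> comp T A x" "P x"
    and "\<And>a b. a \<in> comp T A x \<Longrightarrow> P a \<Longrightarrow> a \<in> A \<Longrightarrow> b \<in> A \<Longrightarrow> tadj T a b \<Longrightarrow> P b"
  shows "P y"
proof -
  have "(\<lambda>a b. a \<in> A \<and> b \<in> A \<and> tadj T a b)\<^sup>*\<^sup>* x y"
    using assms(1) unfolding comp_def by simp
  then show ?thesis
  proof (induction rule: rtranclp_induct)
    case (step a b)
    have "a \<in> comp T A x"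
      using step.hyps(1) unfolding comp_def by simp
    then show ?case
      using assms(3) step by blast
  qed (rule assms(2))
qed

lemma comp_step: "y \<in> comp T A x \<Longrightarrow> y \<in> A \<Longrightarrow> z \<in> A \<Longrightarrow> tadj T y z \<Longrightarrow> z \<in> comp T A x"
  unfolding comp_def by (auto intro: rtranclp.rtrancl_into_rtrancl)

lemma comp_closed:
  assumes "x \<in> S" "\<And>a b. a \<in> A \<Longrightarrow> a \<in> S \<Longrightarrow> b \<in> A \<Longrightarrow> tadj T a b \<Longrightarrow> b \<in> S"
  shows "comp T A x \<subseteq> S"
proof
  fix y assume "y \<in> comp T A x"
  then show "y \<in> S"
    by (induction rule: comp_induct) (use assms in blast)+
qed

lemma comp_subset: "x \<in> A \<Longrightarrow> comp T A x \<subseteq> A"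
  by (rule comp_closed) auto

lemma comp_sym: "y \<in> comp T A x \<Longrightarrow> x \<in> comp T A y"
proof -
  assume "y \<in> comp T A x"
  then have "(\<lambda>a b. a \<in> A \<and> b \<in> A \<and> tadj T a b)\<^sup>*\<^sup>* x y"
    unfolding comp_def by simp
  then have "(\<lambda>a b. a \<in> A \<and> b \<in> A \<and> tadj T a b)\<^sup>*\<^sup>* y x"
    by (induction rule: rtranclp_induct)
      (auto intro: converse_rtranclp_into_rtranclp dest: tadj_sym)
  then show ?thesis
    unfolding comp_def by simp
qed

lemma comp_trans: "y \<in> comp T A x \<Longrightarrow> z \<in> comp T A y \<Longrightarrow> z \<in> comp T A x"
  unfolding comp_def by auto

lemma comp_eq: "y \<in> comp T A x \<Longrightarrow> comp T A y = comp T A x"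
  using comp_sym comp_trans by blast

lemma comp_mono: "A \<subseteq> B \<Longrightarrow> comp T A x \<subseteq> comp T B x"
  unfolding comp_def by (auto elim!: rtranclp_mono[THEN predicate2D, rotated])

lemma comp_restrict:
  assumes "comp T A y \<subseteq> S" "A \<inter> S \<subseteq> B"
  shows "comp T A y \<subseteq> comp T B y"
proof
  fix z assume "z \<in> comp T A y"
  then show "z \<in> comp T B y"
  proof (induction rule: comp_induct)
    case refl
    show ?case by (rule comp_refl)
  next
    case (step a b)
    then have "b \<in> comp T A y"
      using comp_step by blast
    then have "a \<in> B" "b \<in> B"
      using step assms by auto
    then show ?case
      using comp_step[OF step.IH _ _ step.hyps(4)] by blast
  qed
qed

lemma path_in_comp:
  "anc T a b \<Longrightarrow> (\<And>p. anc T a p \<Longrightarrow> anc T p b \<Longrightarrow> p \<in> A) \<Longrightarrow> b \<in> comp T A a"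
proof (induction rule: anc.induct)
  case (anc_refl v)
  show ?case by (rule comp_refl)
next
  case (anc_step w x)
  have up: "anc T p w" if "anc T p (parent T w)" for p
    using anc.anc_step[OF anc_step.hyps(1,2) that] .
  have "parent T w \<in> comp T A x"
    using anc_step.IH anc_step.prems up by blast
  moreover have "parent T w \<in> A"
    using anc_step.prems[OF anc_step.hyps(3) up[OF anc_refl]] anc_in_verts[OF anc_step.hyps(3)] by blast
  moreover have "w \<in> A"
    using anc_step.prems[OF anc.anc_step[OF anc_step.hyps] anc_refl[OF anc_step.hyps(1)]] .
  moreover have "tadj T (parent T w) w"
    unfolding tadj_def using anc_step anc_in_verts by blast
  ultimately show ?case
    by (rule comp_step)
qed

lemma comp_below:
  assumes "anc T w y" "parent T w \<notin> A"
  shows "comp T A y \<subseteq> {z. anc T w z}"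
proof (rule comp_closed)
  fix a b assume "a \<in> A" "a \<in> {z. anc T w z}" "b \<in> A" "tadj T a b"
  then show "b \<in> {z. anc T w z}"
    unfolding tadj_def using assms(2) anc_properD by (auto intro: anc.intros)
qed (use assms(1) in simp)

lemma comp_not_below:
  assumes "\<not> anc T b y" "b \<notin> A"
  shows "comp T A y \<subseteq> {z. \<not> anc T b z}"
proof (rule comp_closed)
  fix a c assume "a \<in> A" "a \<in> {z. \<not> anc T b z}" "c \<in> A" "tadj T a c"
  then show "c \<in> {z. \<not> anc T b z}"
    unfolding tadj_def using assms(2) anc_properD by (auto intro: anc.intros)
qed (use assms(1) in simp)

definition rooted_subtree :: "rtree \<Rightarrow> nat set \<Rightarrow> nat \<Rightarrow> bool" where
  "rooted_subtree T R r \<longleftrightarrow> r \<in> R \<and> R \<subseteq> verts T \<and> (\<forall>y\<in>R. anc T r y)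
     \<and> (\<forall>y\<in>R. y \<noteq> r \<longrightarrow> parent T y \<in> R)"

context tree
begin

lemma rooted_subtree_verts: "rooted_subtree T (verts T) (root T)"
  unfolding rooted_subtree_def using root_in_verts anc_root parent_in_verts by auto

lemma rooted_subtree_convex:
  assumes "rooted_subtree T R r" "anc T r p" "anc T p a" "a \<in> R"
  shows "p \<in> R"
  using assms(3,1,4,2)
proof (induction rule: anc.induct)
  case (anc_step w x)
  show ?case
  proof (cases "w = r")
    case True
    then have "x = r"
      using anc_step anc_antisym by (blast intro: anc.intros)
    then show ?thesis
      using anc_step.prems(1) unfolding rooted_subtree_def by simp
  next
    case False
    then show ?thesis
      using anc_step unfolding rooted_subtree_def by blast
  qed
qed

lemma rooted_subtree_rt:
  assumes "rooted_subtree T R r"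
  shows "rt T R = r"
  unfolding rt_def
proof (rule the_equality)
  show "r \<in> R \<and> (r = root T \<or> parent T r \<notin> R)"
    using assms not_anc_parent unfolding rooted_subtree_def by blast
next
  fix x assume "x \<in> R \<and> (x = root T \<or> parent T x \<notin> R)"
  then show "x = r"
    using assms anc_root_eq unfolding rooted_subtree_def by metis
qed

lemma rooted_subtree_Rsub:
  assumes "rooted_subtree T R r" "w \<in> R"
  shows "rooted_subtree T (Rsub T R w) w"
  using assms anc_properD anc_antisym unfolding rooted_subtree_def Rsub_def
  by (auto intro: anc.intros)

lemma rooted_subtree_subset_comp:
  assumes "rooted_subtree T R r" "R \<subseteq> A" "a \<in> R" "a \<in> comp T A y"
  shows "R \<subseteq> comp T A y"
proof -
  have R_comp: "z \<in> comp T A r" if "z \<in> R" for z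
  proof (rule path_in_comp)
    show "anc T r z"
      using assms(1) that unfolding rooted_subtree_def by blast
    show "p \<in> A" if "anc T r p" "anc T p z" for p
      using rooted_subtree_convex[OF assms(1) that \<open>z \<in> R\<close>] assms(2) by blast
  qed
  have "comp T A r = comp T A y"
    using comp_eq[OF R_comp[OF assms(3)]] comp_eq[OF assms(4)] by simp
  then show ?thesis
    using R_comp by blast
qed

lemma comp_path_from_min_depth:
  assumes "A \<subseteq> verts T" "r \<in> A" "\<And>z. z \<in> comp T A r \<Longrightarrow> depth T r \<le> depth T z"
    and "y \<in> comp T A r"
  shows "anc T r y \<and> (\<forall>p. anc T r p \<and> anc T p y \<longrightarrow> p \<in> comp T A r)"
  using assms(4)
proof (induction rule: comp_induct)
  case refl
  have "anc T r r"
    using assms(1,2) anc_refl by blast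
  then show ?case
    using anc_antisym comp_refl by blast
next
  case (step y z)
  have zK: "z \<in> comp T A r"
    using comp_step[OF step.hyps] .
  have zv: "z \<in> verts T" and yv: "y \<in> verts T"
    using step.hyps(2,3) assms(1) by auto
  from step.hyps(4) consider "z \<noteq> root T" "parent T z = y" | "y \<noteq> root T" "parent T y = z"
    unfolding tadj_def by blast
  then show ?case
  proof cases
    case 1
    have "anc T r z"
      using anc.anc_step[OF zv 1(1)] step.IH 1(2) by blast
    moreover have "p = z \<or> anc T p y" if "anc T p z" for p
      using anc_properD[OF that] 1(2) by blast
    ultimately show ?thesis
      using step.IH zK by blast
  next
    case 2
    have "y \<noteq> r"
      using assms(3)[OF zK] depth_parent[OF yv 2(1)] 2(2) by auto
    then have "anc T r z"
      using anc_properD step.IH 2(2) by blast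
    moreover have "anc T p y" if "anc T p z" for p
      using anc_trans[OF that] anc_parent[OF yv 2(1)] 2(2) by simp
    ultimately show ?thesis
      using step.IH by blast
  qed
qed

lemma comp_rooted_subtree:
  assumes "x \<in> A" "A \<subseteq> verts T"
  shows "\<exists>r. rooted_subtree T (comp T A x) r"
proof -
  obtain r where r: "r \<in> comp T A x" and r_min: "\<And>y. y \<in> comp T A x \<Longrightarrow> depth T r \<le> depth T y"
    using ex_has_least_nat[of "\<lambda>y. y \<in> comp T A x" x "depth T"] comp_refl by blast
  have K: "comp T A r = comp T A x"
    using comp_eq[OF r] .
  have KA: "comp T A r \<subseteq> A"
    unfolding K using comp_subset assms(1) by blast
  then have rA: "r \<in> A"
    using comp_refl by blast
  have path: "anc T r y \<and> (\<forall>p. anc T r p \<and> anc T p y \<longrightarrow> p \<in> comp T A r)"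
    if "y \<in> comp T A r" for y
    by (rule comp_path_from_min_depth[OF assms(2) rA _ that]) (use r_min K in simp)
  have "parent T y \<in> comp T A r" if "y \<in> comp T A r" "y \<noteq> r" for y
  proof -
    have "anc T r (parent T y)" and y_root: "y \<noteq> root T"
      using path[OF that(1)] anc_properD that(2) by blast+
    moreover have "anc T (parent T y) y"
      using anc_parent y_root that(1) KA assms(2) by blast
    ultimately show ?thesis
      using path[OF that(1)] by blast
  qed
  then have "rooted_subtree T (comp T A r) r"
    unfolding rooted_subtree_def using comp_refl KA assms(2) path by blast
  then show ?thesis
    unfolding K by blast
qed


lemma chain_deepest:
  assumes "finite X" "x \<in> X" "\<And>a b. a \<in> X \<Longrightarrow> b \<in> X \<Longrightarrow> anc T a b \<or> anc T b a"
  obtains d where "d \<in> X" "\<And>y. y \<in> X \<Longrightarrow> anc T y d"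
proof -
  obtain d where d: "d \<in> X" "\<And>y. y \<in> X \<Longrightarrow> depth T y \<le> depth T d"
    using ex_has_greatest_nat[of "\<lambda>y. y \<in> X" x "depth T" "Suc (Max (depth T ` X))"] assms(1,2)
    by (auto simp: le_imp_less_Suc)
  have "anc T y d" if "y \<in> X" for y
    using assms(3)[OF that d(1)] d(2)[OF that] anc_depth_less by (metis leD)
  then show ?thesis
    using that d(1) by blast
qed

lemma chain_highest:
  assumes "x \<in> X" "\<And>a b. a \<in> X \<Longrightarrow> b \<in> X \<Longrightarrow> anc T a b \<or> anc T b a"
  obtains h where "h \<in> X" "\<And>y. y \<in> X \<Longrightarrow> anc T h y"
proof -
  obtain h where h: "h \<in> X" "\<And>y. y \<in> X \<Longrightarrow> depth T h \<le> depth T y"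
    using ex_has_least_nat[of "\<lambda>y. y \<in> X" x "depth T"] assms(1) by blast
  have "anc T h y" if "y \<in> X" for y
    using assms(2)[OF that h(1)] h(2)[OF that] anc_depth_less by (metis leD)
  then show ?thesis
    using that h(1) by blast
qed

lemma deepest_eq: "d \<in> X \<Longrightarrow> (\<And>y. y \<in> X \<Longrightarrow> anc T y d) \<Longrightarrow> deepest T X = d"
  unfolding deepest_def by (rule the_equality) (auto intro: anc_antisym)

lemma highest_eq: "h \<in> X \<Longrightarrow> (\<And>y. y \<in> X \<Longrightarrow> anc T h y) \<Longrightarrow> highest T X = h"
  unfolding highest_def by (rule the_equality) (auto intro: anc_antisym)

lemma in_children_iff: "c \<in> children T x \<longleftrightarrow> c \<in> verts T \<and> c \<noteq> root T \<and> parent T c = x"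
  unfolding children_def by blast

lemma ex_child_anc: "anc T x v \<Longrightarrow> x \<noteq> v \<Longrightarrow> \<exists>c. c \<in> children T x \<and> anc T c v"
proof (induction rule: anc.induct)
  case (anc_step w x)
  then show ?case
    by (cases "x = parent T w") (auto simp: in_children_iff intro: anc.intros)
qed simp

lemma child_toward_eq:
  assumes "c \<in> children T x" "anc T c v"
  shows "child_toward T x v = c"
  unfolding child_toward_def
proof (rule the_equality)
  fix c' assume c': "c' \<in> children T x \<and> anc T c' v"
  then have "anc T c c' \<or> anc T c' c"
    using anc_linear assms(2) by blast
  then show "c' = c"
    using assms(1) c' anc_properD not_anc_parent by (metis in_children_iff)
qed (use assms in blast)

end

section \<open>Leftmost paths\<close>

lemma onP_in: "onP T R v w \<Longrightarrow> w \<in> R"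
  by (induction rule: onP.induct) (auto simp: has_lc_def)

lemma onP_mono: "onP T Q v w \<Longrightarrow> Q \<subseteq> Q' \<Longrightarrow> onP T Q' v w"
proof (induction rule: onP.induct)
  case (onP_next w)
  then have "has_lc T Q' w"
    unfolding has_lc_def by blast
  then show ?case
    using onP_next by (blast intro: onP.onP_next)
qed (blast intro: onP.onP_start)

lemma onP_prev: "onP T R v w \<Longrightarrow> w \<noteq> v \<Longrightarrow> \<exists>p. onP T R v p \<and> has_lc T R p \<and> w = lc T p"
  by (induction rule: onP.induct) auto

text \<open>Only lc_child uses valid_lc: routing needs that lc w is a child of w, not that its
  subtree is a largest one.\<close>

locale lc_tree = tree +
  assumes valid_lc: "valid_lc T"
begin

lemma lc_child:
  "has_lc T R w \<Longrightarrow> w \<in> verts T \<Longrightarrow> lc T w \<in> verts T \<and> lc T w \<noteq> root T \<and> parent T (lc T w) = w"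
  using valid_lc unfolding valid_lc_def has_lc_def children_def by blast

lemma lc_anc: "has_lc T R w \<Longrightarrow> w \<in> verts T \<Longrightarrow> anc T w (lc T w)"
  using lc_child anc_parent by metis

lemma lc_neq: "has_lc T R w \<Longrightarrow> w \<in> verts T \<Longrightarrow> lc T w \<noteq> w"
  using lc_child parent_neq by metis

lemma onP_anc: "onP T R v w \<Longrightarrow> R \<subseteq> verts T \<Longrightarrow> anc T v w"
proof (induction rule: onP.induct)
  case (onP_next w)
  then show ?case
    using onP_in lc_anc anc_trans by blast
qed (auto intro: anc.intros)

lemma onP_below:
  "onP T R v a \<Longrightarrow> R \<subseteq> verts T \<Longrightarrow> onP T R v w \<Longrightarrow> anc T w a \<Longrightarrow> a \<noteq> w
    \<Longrightarrow> has_lc T R w \<and> anc T (lc T w) a"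
proof (induction rule: onP.induct)
  case onP_start
  then show ?case
    using onP_anc anc_antisym by blast
next
  case (onP_next w')
  have w'v: "w' \<in> verts T"
    using onP_next onP_in by blast
  then have "anc T w w'"
    using onP_next.prems(3,4) lc_child[OF onP_next(2)] anc_properD by metis
  show ?case
  proof (cases "w' = w")
    case True
    then show ?thesis
      using onP_next(2) lc_child[OF onP_next(2) w'v] by (auto intro: anc_refl)
  next
    case False
    then have "anc T (lc T w) w'"
      using onP_next \<open>anc T w w'\<close> by blast
    then show ?thesis
      using onP_next.IH onP_next.prems False \<open>anc T w w'\<close> lc_anc[OF onP_next(2) w'v] anc_trans by blast
  qed
qed

lemma onP_linear: "onP T R v b \<Longrightarrow> onP T R v a \<Longrightarrow> R \<subseteq> verts T \<Longrightarrow> anc T a b \<or> anc T b a"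
proof (induction rule: onP.induct)
  case onP_start
  then show ?case
    using onP_anc by blast
next
  case (onP_next w)
  have w_lc: "anc T w (lc T w)"
    using onP_next onP_in lc_anc by blast
  consider "anc T a w" | "a = w" | "anc T w a" "a \<noteq> w"
    using onP_next.IH onP_next.prems by blast
  then show ?case
  proof cases
    case 1
    then show ?thesis
      using w_lc anc_trans by blast
  next
    case 2
    then show ?thesis
      using w_lc by blast
  next
    case 3
    then show ?thesis
      using onP_below[OF onP_next.prems(1,2) onP_next.hyps(1)] by blast
  qed
qed

lemma onP_suffix:
  "onP T Q s y \<Longrightarrow> Q \<subseteq> verts T \<Longrightarrow> anc T s a \<Longrightarrow> anc T a y
    \<Longrightarrow> (\<And>p. anc T a p \<Longrightarrow> anc T p y \<Longrightarrow> p \<in> Q') \<Longrightarrow> onP T Q' a y"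
proof (induction rule: onP.induct)
  case onP_start
  then show ?case
    using anc_antisym by (blast intro: onP.intros anc.intros)
next
  case (onP_next w)
  have wv: "w \<in> verts T"
    using onP_next onP_in by blast
  have lc_in: "lc T w \<in> Q'"
    using onP_next.prems(3,4) anc_refl lc_child[OF onP_next(2) wv] by blast
  show ?case
  proof (cases "a = lc T w")
    case True
    then show ?thesis
      using lc_in by (auto intro: onP.intros)
  next
    case False
    then have "anc T a w"
      using onP_next.prems(3) lc_child[OF onP_next(2) wv] anc_properD by metis
    then have "onP T Q' a w"
      using onP_next lc_anc[OF onP_next(2) wv] anc_trans by blast
    moreover have "has_lc T Q' w"
      using onP_next(2) lc_in unfolding has_lc_def by blast
    ultimately show ?thesis
      by (rule onP.onP_next)
  qed
qed

lemma lend_eq: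
  assumes "R \<subseteq> verts T" "onP T R v w" "\<not> has_lc T R w"
  shows "lend T R v = w"
  unfolding lend_def
proof (rule the_equality)
  fix x assume x: "onP T R v x \<and> \<not> has_lc T R x"
  show "x = w"
  proof (rule ccontr)
    assume ne: "x \<noteq> w"
    have "anc T x w \<or> anc T w x"
      using onP_linear[OF assms(2)] x assms(1) by blast
    then show False
    proof
      assume "anc T x w"
      then show False
        using onP_below[OF assms(2,1)] x ne by blast
    next
      assume "anc T w x"
      then show False
        using onP_below[of R v x w] x ne assms by blast
    qed
  qed
qed (use assms in blast)

lemma lend_spec:
  assumes "R \<subseteq> verts T" "v \<in> R"
  shows "onP T R v (lend T R v)" "\<not> has_lc T R (lend T R v)"
proof -
  define P where "P = {w. onP T R v w}"
  have "P \<subseteq> verts T"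
    using onP_in assms(1) unfolding P_def by blast
  moreover have "v \<in> P"
    using assms(2) onP_start unfolding P_def by blast
  moreover have "anc T a b \<or> anc T b a" if "a \<in> P" "b \<in> P" for a b
    using onP_linear that assms(1) unfolding P_def by blast
  ultimately obtain d where "d \<in> P" "\<And>y. y \<in> P \<Longrightarrow> anc T y d"
    using chain_deepest[OF finite_subset_verts] by blast
  then have d: "onP T R v d" "\<And>y. onP T R v y \<Longrightarrow> anc T y d"
    unfolding P_def by auto
  have "\<not> has_lc T R d"
  proof
    assume lc: "has_lc T R d"
    have dv: "d \<in> verts T"
      using onP_in d(1) assms(1) by blast
    have "anc T (lc T d) d"
      using d(2) onP_next[OF d(1) lc] .
    then show False
      using lc_anc[OF lc dv] lc_neq[OF lc dv] anc_antisym by blast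
  qed
  then show "onP T R v (lend T R v)" "\<not> has_lc T R (lend T R v)"
    using lend_eq[OF assms(1) d(1)] d(1) by auto
qed

end

section \<open>The vertex sets CV(R,d) and C_R\<close>

context lc_tree
begin

lemma bfirst_SomeD:
  assumes "bfirst T R d v = Some b" "R \<subseteq> verts T"
  shows "onP T R v b" "balanced T R d b" "\<And>w. onP T R v w \<Longrightarrow> balanced T R d w \<Longrightarrow> anc T b w"
proof -
  define X where "X = {w. onP T R v w \<and> balanced T R d w}"
  obtain x where "x \<in> X"
    using assms(1) unfolding bfirst_def X_def by (auto split: if_splits)
  moreover have "anc T a c \<or> anc T c a" if "a \<in> X" "c \<in> X" for a c
    using onP_linear that assms(2) unfolding X_def by blast
  ultimately obtain h where h: "h \<in> X" "\<And>y. y \<in> X \<Longrightarrow> anc T h y"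
    using chain_highest by blast
  have "(THE w. onP T R v w \<and> balanced T R d w \<and>
            (\<forall>w'. onP T R v w' \<and> balanced T R d w' \<longrightarrow> anc T w w')) = h"
    by (rule the_equality) (use h anc_antisym in \<open>auto simp: X_def\<close>)
  then have "bfirst T R d v = Some h"
    using h unfolding bfirst_def X_def by auto
  then show "onP T R v b" "balanced T R d b" "\<And>w. onP T R v w \<Longrightarrow> balanced T R d w \<Longrightarrow> anc T b w"
    using assms(1) h unfolding X_def by auto
qed

lemma bfirst_NoneD: "bfirst T R d v = None \<Longrightarrow> onP T R v w \<Longrightarrow> \<not> balanced T R d w"
  unfolding bfirst_def by (auto split: if_splits)

lemma cv_in: "cv T d R x \<Longrightarrow> R \<subseteq> verts T \<Longrightarrow> x \<in> R"
  by (induction rule: cv.induct) (auto simp: Rsub_def dest: bfirst_SomeD onP_in)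

lemma card_lt_if_bfirst_None:
  assumes "rooted_subtree T Q q" "bfirst T Q d q = None"
  shows "real (card Q) < d"
proof -
  have "Q \<subseteq> verts T" "q \<in> Q"
    using assms(1) unfolding rooted_subtree_def by auto
  then have "\<not> balanced T Q d (lend T Q q)" "lcsize T Q (lend T Q q) = 0"
    using lend_spec bfirst_NoneD[OF assms(2)] by (auto simp: lcsize_def)
  then show ?thesis
    by (simp add: balanced_def)
qed

text \<open>The parent of b on the leftmost path is not d-balanced, so the subtree below b
  misses fewer than d vertices of Q.\<close>

lemma card_outside_bfirst_lt:
  assumes "rooted_subtree T Q q" "bfirst T Q d q = Some b" "b \<noteq> q"
  shows "real (card (Q - Rsub T Q b)) < d"
proof -
  have Qv: "Q \<subseteq> verts T"
    using assms(1) unfolding rooted_subtree_def by auto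
  note b = bfirst_SomeD[OF assms(2) Qv]
  obtain p where p: "onP T Q q p" "has_lc T Q p" "b = lc T p"
    using onP_prev b(1) assms(3) by blast
  have pv: "p \<in> verts T"
    using p(1) onP_in Qv by blast
  have "\<not> balanced T Q d p"
    using b(3)[OF p(1)] lc_anc[OF p(2) pv] lc_neq[OF p(2) pv] p(3) anc_antisym by blast
  then have "real (card (Rsub T Q b)) > real (card Q) - d"
    unfolding balanced_def lcsize_def using p by simp
  moreover have "card (Q - Rsub T Q b) = card Q - card (Rsub T Q b)"
    using finite_subset_verts[OF Qv] by (intro card_Diff_subset) (auto simp: Rsub_def finite_subset)
  moreover have "card (Rsub T Q b) \<le> card Q"
    using finite_subset_verts[OF Qv] by (intro card_mono) (auto simp: Rsub_def)
  ultimately show ?thesis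
    by (simp add: of_nat_diff)
qed

lemma Rsub_child_psubset:
  assumes "rooted_subtree T Q q" "b \<in> Q" "w \<in> children T b" "anc T w y" "y \<in> Q"
  shows "w \<in> Q" "Rsub T Q w \<subset> Q"
proof -
  have w: "parent T w = b" "w \<in> verts T" "w \<noteq> root T"
    using assms(3) in_children_iff by auto
  then have bw: "anc T b w" "w \<noteq> b"
    using anc_parent[OF w(2,3)] parent_neq[OF w(2,3)] by auto
  have "anc T q w"
    using anc_trans[OF _ bw(1)] assms(1,2) unfolding rooted_subtree_def by blast
  then show "w \<in> Q"
    using rooted_subtree_convex[OF assms(1) _ assms(4,5)] by blast
  have "b \<notin> Rsub T Q w"
    using anc_antisym[OF bw(1)] bw(2) unfolding Rsub_def by blast
  then show "Rsub T Q w \<subset> Q"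
    using assms(2) unfolding Rsub_def by blast
qed

lemma card_comp_minus_cv_not_below_lt:
  assumes "rooted_subtree T Q q" "bfirst T Q d q = Some b" "y \<in> Q" "\<not> cv T d Q y" "\<not> anc T b y"
  shows "real (card (comp T (Q - {x. cv T d Q x}) y)) < d"
proof -
  have Qv: "Q \<subseteq> verts T"
    using assms(1) unfolding rooted_subtree_def by blast
  have "b \<noteq> q"
    using assms(1,3,5) unfolding rooted_subtree_def by blast
  have "cv T d Q b"
    using cv_here[OF assms(2)[folded rooted_subtree_rt[OF assms(1)]]] .
  then have "comp T (Q - {x. cv T d Q x}) y \<subseteq> {z. \<not> anc T b z}"
    by (intro comp_not_below[OF assms(5)]) blast
  moreover have "comp T (Q - {x. cv T d Q x}) y \<subseteq> Q - {x. cv T d Q x}"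
    using assms(3,4) by (intro comp_subset) blast
  ultimately have "comp T (Q - {x. cv T d Q x}) y \<subseteq> Q - Rsub T Q b"
    unfolding Rsub_def by blast
  moreover have "finite (Q - Rsub T Q b)"
    using finite_subset_verts[OF Qv] by blast
  ultimately have "card (comp T (Q - {x. cv T d Q x}) y) \<le> card (Q - Rsub T Q b)"
    by (rule card_mono[rotated])
  then show ?thesis
    using card_outside_bfirst_lt[OF assms(1,2) \<open>b \<noteq> q\<close>] by linarith
qed

lemma comp_minus_cv_below_child:
  assumes "rooted_subtree T Q q" "bfirst T Q d q = Some b" "w \<in> children T b" "w \<in> Q"
    and "anc T w y" "y \<in> Q" "\<not> cv T d Q y"
  shows "comp T (Q - {x. cv T d Q x}) y \<subseteq> comp T (Rsub T Q w - {x. cv T d (Rsub T Q w) x}) y"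
proof -
  have some_b: "bfirst T Q d (rt T Q) = Some b"
    using assms(2) rooted_subtree_rt[OF assms(1)] by simp
  have "parent T w = b"
    using assms(3) in_children_iff by blast
  then have "cv T d Q (parent T w)"
    using cv_here[OF some_b] by simp
  then have "comp T (Q - {x. cv T d Q x}) y \<subseteq> {z. anc T w z}"
    by (intro comp_below[OF assms(5)]) blast
  moreover have "comp T (Q - {x. cv T d Q x}) y \<subseteq> Q - {x. cv T d Q x}"
    using assms(6,7) by (intro comp_subset) blast
  ultimately have "comp T (Q - {x. cv T d Q x}) y \<subseteq> Rsub T Q w"
    unfolding Rsub_def by blast
  moreover have "\<not> cv T d (Rsub T Q w) x" if "\<not> cv T d Q x" for x
    using cv_rec[OF some_b assms(4,3)] that by blast
  then have "(Q - {x. cv T d Q x}) \<inter> Rsub T Q w \<subseteq> Rsub T Q w - {x. cv T d (Rsub T Q w) x}"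
    by blast
  ultimately show ?thesis
    by (rule comp_restrict)
qed

text \<open>A component below b = b_d(rt Q) lies in the subtree of a child of b, where CV recurses;
  a component not below b avoids the heavy subtree below b.\<close>

lemma card_comp_minus_cv_lt:
  "rooted_subtree T Q q \<Longrightarrow> y \<in> Q \<Longrightarrow> \<not> cv T d Q y
    \<Longrightarrow> real (card (comp T (Q - {x. cv T d Q x}) y)) < d"
proof (induction "card Q" arbitrary: Q q y rule: less_induct)
  case less
  have Qv: "Q \<subseteq> verts T"
    using less.prems(1) unfolding rooted_subtree_def by blast
  have fQ: "finite Q"
    using finite_subset_verts[OF Qv] .
  show ?case
  proof (cases "bfirst T Q d q")
    case None
    have "comp T (Q - {x. cv T d Q x}) y \<subseteq> Q"
      using comp_subset[of y "Q - {x. cv T d Q x}"] less.prems(2,3) by blast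
    then have "card (comp T (Q - {x. cv T d Q x}) y) \<le> card Q"
      using card_mono[OF fQ] by blast
    then show ?thesis
      using card_lt_if_bfirst_None[OF less.prems(1) None] by linarith
  next
    case (Some b)
    show ?thesis
    proof (cases "anc T b y")
      case True
      have "cv T d Q b" "b \<in> Q"
        using Some rooted_subtree_rt[OF less.prems(1)] cv_in Qv by (auto intro: cv_here)
      then obtain w where w: "w \<in> children T b" "anc T w y"
        using ex_child_anc True less.prems(3) by blast
      note wQ = Rsub_child_psubset[OF less.prems(1) \<open>b \<in> Q\<close> w less.prems(2)]
      define Qw where "Qw = Rsub T Q w"
      have "Qw \<subset> Q"
        using wQ(2) unfolding Qw_def .
      then have "card Qw < card Q"
        using fQ by (rule psubset_card_mono[rotated])
      moreover have "rooted_subtree T Qw w" "y \<in> Qw" "\<not> cv T d Qw y"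
        using rooted_subtree_Rsub[OF less.prems(1) wQ(1)] w(2) less.prems(2,3)
          cv_rec[OF Some[folded rooted_subtree_rt[OF less.prems(1)]] wQ(1) w(1)]
        unfolding Qw_def Rsub_def by auto
      ultimately have IH: "real (card (comp T (Qw - {x. cv T d Qw x}) y)) < d"
        using less.hyps by blast
      have "comp T (Qw - {x. cv T d Qw x}) y \<subseteq> Q"
        using comp_subset[of y "Qw - {x. cv T d Qw x}"] \<open>y \<in> Qw\<close> \<open>\<not> cv T d Qw y\<close> \<open>Qw \<subset> Q\<close>
        by blast
      then have "card (comp T (Q - {x. cv T d Q x}) y) \<le> card (comp T (Qw - {x. cv T d Qw x}) y)"
        using comp_minus_cv_below_child[OF less.prems(1) Some w(1) wQ(1) w(2) less.prems(2,3)]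
          finite_subset[OF _ fQ] unfolding Qw_def by (intro card_mono) auto
      then show ?thesis
        using IH by linarith
    qed (use card_comp_minus_cv_not_below_lt[OF less.prems(1) Some less.prems(2,3)] in blast)
  qed
qed

lemma cv_parent_onP:
  "cv T d Q z \<Longrightarrow> rooted_subtree T Q q \<Longrightarrow> z \<noteq> root T \<Longrightarrow> parent T z \<in> Q
    \<Longrightarrow> \<not> cv T d Q (parent T z)
    \<Longrightarrow> has_lc T Q (parent T z) \<and> lc T (parent T z) = z \<and>
       (\<exists>s. onP T Q s (parent T z) \<and> (s = q \<or> (s \<noteq> root T \<and> cv T d Q (parent T s))))"
proof (induction arbitrary: q rule: cv.induct)
  case (cv_here R b)
  have Rv: "R \<subseteq> verts T"
    using cv_here.prems unfolding rooted_subtree_def by blast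
  have bp: "onP T R q b"
    using bfirst_SomeD[OF cv_here.hyps[unfolded rooted_subtree_rt[OF cv_here.prems(1)]] Rv] by blast
  have "b \<noteq> q"
    using cv_here.prems not_anc_parent onP_in[OF bp] Rv unfolding rooted_subtree_def by blast
  then obtain p where p: "onP T R q p" "has_lc T R p" "b = lc T p"
    using onP_prev bp by blast
  then have "parent T b = p"
    using lc_child onP_in Rv by blast
  then show ?case
    using p by auto
next
  case (cv_rec R b w x)
  have Rv: "R \<subseteq> verts T"
    using cv_rec.prems unfolding rooted_subtree_def by blast
  have wb: "parent T w = b"
    using cv_rec.hyps(3) in_children_iff by blast
  have cvb: "cv T d R b"
    using cv_rec.hyps(1) by (rule cv.cv_here)
  have RwR: "Rsub T R w \<subseteq> R"
    unfolding Rsub_def by blast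
  have "x \<in> Rsub T R w"
    using cv_in[OF cv_rec.hyps(4)] RwR Rv by blast
  moreover have "x \<noteq> w"
    using cv_rec.prems(4) wb cvb by blast
  ultimately have "parent T x \<in> Rsub T R w"
    using anc_properD cv_rec.prems(3) unfolding Rsub_def by blast
  moreover have "\<not> cv T d (Rsub T R w) (parent T x)"
    using cv_rec.prems(4) cv.cv_rec[OF cv_rec.hyps(1-3)] by blast
  ultimately obtain s where
    "has_lc T (Rsub T R w) (parent T x)" "lc T (parent T x) = x"
    "onP T (Rsub T R w) s (parent T x)" "s = w \<or> (s \<noteq> root T \<and> cv T d (Rsub T R w) (parent T s))"
    using cv_rec.IH rooted_subtree_Rsub[OF cv_rec.prems(1) cv_rec.hyps(2)] cv_rec.prems(2) by blast
  then show ?case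
    using RwR onP_mono wb cvb cv.cv_rec[OF cv_rec.hyps(1-3)] in_children_iff cv_rec.hyps(3)
    unfolding has_lc_def by blast
qed

lemma Cset_cases:
  "Cset T k R = R \<or> Cset T k R = {x. cv T (real (card R) / real k) R x} \<union> {lend T R (rt T R), rt T R}"
  unfolding Cset_def Let_def by auto

lemma Cset_subset:
  assumes "rooted_subtree T R r"
  shows "Cset T k R \<subseteq> R"
proof -
  have Rv: "R \<subseteq> verts T" and rR: "r \<in> R"
    using assms unfolding rooted_subtree_def by auto
  have "lend T R (rt T R) \<in> R"
    using onP_in[OF lend_spec(1)[OF Rv rR]] rooted_subtree_rt[OF assms] by simp
  moreover have "{x. cv T d R x} \<subseteq> R" for d
    using cv_in Rv by blast
  ultimately show ?thesis
    using Cset_cases[of k R] rooted_subtree_rt[OF assms] rR by blast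
qed

lemma rt_in_Cset: "rooted_subtree T R r \<Longrightarrow> r \<in> Cset T k R"
  using Cset_cases[of k R] rooted_subtree_rt unfolding rooted_subtree_def by blast

lemma card_comp_minus_Cset:
  assumes "rooted_subtree T R r" "y \<in> R - Cset T k R" "k > 0"
  shows "real k * real (card (comp T (R - Cset T k R) y)) < real (card R)"
proof -
  define d where "d = real (card R) / real k"
  have C: "Cset T k R = {x. cv T d R x} \<union> {lend T R (rt T R), rt T R}"
    using Cset_cases[of k R] assms(2) unfolding d_def by blast
  then have "comp T (R - Cset T k R) y \<subseteq> comp T (R - {x. cv T d R x}) y"
    by (intro comp_mono) blast
  moreover have "comp T (R - {x. cv T d R x}) y \<subseteq> R"
    using comp_subset[of y "R - {x. cv T d R x}"] assms(2) C by blast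
  then have "finite (comp T (R - {x. cv T d R x}) y)"
    using finite_subset_verts assms(1) unfolding rooted_subtree_def by (meson subset_trans)
  ultimately have "card (comp T (R - Cset T k R) y) \<le> card (comp T (R - {x. cv T d R x}) y)"
    by (rule card_mono[rotated])
  moreover have "real (card (comp T (R - {x. cv T d R x}) y)) < d"
    using card_comp_minus_cv_lt[OF assms(1)] assms(2) C by blast
  ultimately have "real (card (comp T (R - Cset T k R) y)) < d"
    by linarith
  then show ?thesis
    using assms(3) unfolding d_def by (simp add: field_simps)
qed

end

section \<open>Canonical subtrees\<close>

definition nested_or_disjoint :: "rtree \<Rightarrow> nat \<Rightarrow> nat set \<Rightarrow> nat set \<Rightarrow> bool" where
  "nested_or_disjoint T k S R \<longleftrightarrow>
     S = R \<or> S \<inter> R = {} \<or> S \<subseteq> R - Cset T k R \<or> R \<subseteq> S - Cset T k S"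

context lc_tree
begin

lemma canon_rooted_subtree: "canon T k R \<Longrightarrow> \<exists>r. rooted_subtree T R r"
proof (induction rule: canon.induct)
  case canon_T
  then show ?case
    using rooted_subtree_verts by blast
next
  case (canon_comp R x)
  then obtain r where "rooted_subtree T R r"
    by blast
  then have "R - Cset T k R \<subseteq> verts T"
    unfolding rooted_subtree_def by blast
  then show ?case
    using comp_rooted_subtree canon_comp.hyps(2) by blast
qed

lemma canon_subset_verts: "canon T k R \<Longrightarrow> R \<subseteq> verts T"
  using canon_rooted_subtree unfolding rooted_subtree_def by blast

lemma canon_meets_Cset: "canon T k R \<Longrightarrow> R \<inter> Cset T k R \<noteq> {}"
  using canon_rooted_subtree rt_in_Cset unfolding rooted_subtree_def by blast

lemma canon_Cset_subset: "canon T k R \<Longrightarrow> Cset T k R \<subseteq> R"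
  using canon_rooted_subtree Cset_subset by blast

lemma canon_comp_psubset:
  assumes "canon T k R" "x \<in> R - Cset T k R"
  shows "comp T (R - Cset T k R) x \<subset> R"
  using comp_subset[OF assms(2)] canon_meets_Cset[OF assms(1)] by blast

lemma canon_below_root: "canon T k R \<Longrightarrow> R = verts T \<or> R \<subseteq> verts T - Cset T k (verts T)"
proof (induction rule: canon.induct)
  case (canon_comp R x)
  then show ?case
    using comp_subset[OF canon_comp.hyps(2)] by blast
qed simp

lemma nested_or_disjoint_comp:
  assumes "canon T k Q" "x \<in> Q - Cset T k Q" "canon T k P" "y \<in> P - Cset T k P"
    and S_def: "S = comp T (Q - Cset T k Q) x" and R_def: "R = comp T (P - Cset T k P) y"
    and QR: "nested_or_disjoint T k Q R" and SP: "nested_or_disjoint T k S P"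
  shows "nested_or_disjoint T k S R"
proof -
  have SQ: "S \<subseteq> Q - Cset T k Q" and RP: "R \<subseteq> P - Cset T k P"
    unfolding S_def R_def using comp_subset assms(2,4) by blast+
  have "Q - Cset T k Q \<subseteq> verts T" "P - Cset T k P \<subseteq> verts T"
    using canon_subset_verts assms(1,3) by blast+
  then obtain s r where S_sub: "rooted_subtree T S s" and R_sub: "rooted_subtree T R r"
    using comp_rooted_subtree assms(2,4) unfolding S_def R_def by metis
  have "R \<noteq> {}"
    using R_sub unfolding rooted_subtree_def by blast
  have "R \<subseteq> Q - Cset T k Q \<or> nested_or_disjoint T k S R"
    using QR SQ unfolding nested_or_disjoint_def by blast
  moreover have "nested_or_disjoint T k S R" if RQ: "R \<subseteq> Q - Cset T k Q"
  proof (cases "R \<inter> S = {}")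
    case False
    then obtain a where a: "a \<in> R" "a \<in> S"
      by blast
    have RS: "R \<subseteq> S"
      using rooted_subtree_subset_comp[OF R_sub RQ a(1)] a(2) unfolding S_def by blast
    then have "S \<subseteq> P - Cset T k P \<or> R \<subseteq> S - Cset T k S"
      using SP RP \<open>R \<noteq> {}\<close> unfolding nested_or_disjoint_def by blast
    moreover have "S \<subseteq> R" if "S \<subseteq> P - Cset T k P"
      using rooted_subtree_subset_comp[OF S_sub that a(2)] a(1) unfolding R_def by blast
    ultimately show ?thesis
      using RS unfolding nested_or_disjoint_def by blast
  qed (auto simp: nested_or_disjoint_def)
  ultimately show ?thesis
    by blast
qed

lemma canon_nested_or_disjoint:
  assumes "canon T k S" "canon T k R"
  shows "nested_or_disjoint T k S R"
  using assms
proof (induction arbitrary: R rule: canon.induct)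
  case canon_T
  then show ?case
    using canon_below_root unfolding nested_or_disjoint_def by blast
next
  case (canon_comp Q x)
  note Q = canon_comp.hyps and IH_Q = canon_comp.IH
  define S where "S = comp T (Q - Cset T k Q) x"
  have SQ: "S \<subseteq> Q - Cset T k Q"
    unfolding S_def using comp_subset Q(2) by blast
  have "canon T k R \<Longrightarrow> nested_or_disjoint T k S R" for R
  proof (induction rule: canon.induct)
    case canon_T
    consider "Q = verts T" | "Q \<subseteq> verts T - Cset T k (verts T)"
      using canon_below_root[OF Q(1)] by blast
    then have "S \<subseteq> verts T - Cset T k (verts T)"
      using SQ by cases auto
    then show ?case
      unfolding nested_or_disjoint_def by blast
  next
    case (canon_comp P y)
    then show ?case
      using nested_or_disjoint_comp[OF Q canon_comp.hyps S_def refl]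
        IH_Q[OF canon.canon_comp[OF canon_comp.hyps]] by blast
  qed
  then show ?case
    using canon_comp.prems unfolding S_def by blast
qed


lemma Tof_eq:
  assumes "canon T k R" "u \<in> Cset T k R"
  shows "Tof T k u = R"
  unfolding Tof_def
proof (rule the_equality)
  fix S assume S: "canon T k S \<and> u \<in> Cset T k S"
  then have "u \<in> S" "u \<in> R"
    using assms canon_Cset_subset by blast+
  then show "S = R"
    using canon_nested_or_disjoint[OF conjunct1[OF S] assms(1)] S assms(2)
    unfolding nested_or_disjoint_def by blast
qed (use assms in blast)

lemma Tof_spec:
  assumes "u \<in> verts T"
  shows "canon T k (Tof T k u)" "u \<in> Cset T k (Tof T k u)"
proof -
  have "\<exists>R'. canon T k R' \<and> u \<in> Cset T k R'" if "canon T k R" "u \<in> R" for R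
    using that
  proof (induction "card R" arbitrary: R rule: less_induct)
    case less
    show ?case
    proof (cases "u \<in> Cset T k R")
      case False
      define K where "K = comp T (R - Cset T k R) u"
      have "u \<in> R - Cset T k R"
        using False less.prems by blast
      then have "canon T k K" "K \<subset> R"
        unfolding K_def using canon_comp[OF less.prems(1)] canon_comp_psubset[OF less.prems(1)]
        by simp_all
      moreover have "finite R"
        using finite_subset_verts[OF canon_subset_verts[OF less.prems(1)]] .
      ultimately have "card K < card R" "canon T k K"
        using psubset_card_mono by simp_all
      moreover have "u \<in> K"
        unfolding K_def by (rule comp_refl)
      ultimately show ?thesis
        using less.hyps by blast
    qed (use less.prems in blast)
  qed
  then obtain R where "canon T k R" "u \<in> Cset T k R"
    using canon_T assms by blast
  then show "canon T k (Tof T k u)" "u \<in> Cset T k (Tof T k u)"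
    using Tof_eq by simp_all
qed

lemma card_Tof_pos: "u \<in> verts T \<Longrightarrow> 0 < card (Tof T k u)"
  using Tof_spec[of u] canon_Cset_subset canon_subset_verts finite_subset_verts
  by (metis card_gt_0_iff empty_iff subsetD)

lemma card_Tof_le: "u \<in> verts T \<Longrightarrow> card (Tof T k u) \<le> card (verts T)"
  using card_mono[OF finite_verts canon_subset_verts[OF Tof_spec(1)]] .

text \<open>By laminarity R lies in a single component of S - C_S.\<close>

lemma canon_psubset_card:
  assumes "canon T k S" "canon T k R" "R \<subset> S" "k > 0"
  shows "real k * real (card R) < real (card S)"
proof -
  obtain y where yR: "y \<in> R"
    using canon_meets_Cset[OF assms(2)] by blast
  have RS: "R \<subseteq> S - Cset T k S"
    using canon_nested_or_disjoint[OF assms(2,1)] assms(3) yR unfolding nested_or_disjoint_def by blast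
  obtain s r where S_sub: "rooted_subtree T S s" and R_sub: "rooted_subtree T R r"
    using canon_rooted_subtree assms(1,2) by blast
  have "R \<subseteq> comp T (S - Cset T k S) y"
    using rooted_subtree_subset_comp[OF R_sub RS yR comp_refl] .
  moreover have "comp T (S - Cset T k S) y \<subseteq> verts T"
    using comp_subset[of y "S - Cset T k S"] RS yR canon_subset_verts[OF assms(1)] by blast
  then have "finite (comp T (S - Cset T k S) y)"
    by (rule finite_subset_verts)
  ultimately have "real (card R) \<le> real (card (comp T (S - Cset T k S) y))"
    using card_mono by simp
  then have "real k * real (card R) \<le> real k * real (card (comp T (S - Cset T k S) y))"
    by (intro mult_left_mono) auto
  moreover have "real k * real (card (comp T (S - Cset T k S) y)) < real (card S)"
    using card_comp_minus_Cset[OF S_sub _ assms(4)] RS yR by blast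
  ultimately show ?thesis
    by linarith
qed

lemma lend_in_Cset:
  assumes "rooted_subtree T R r"
  shows "lend T R r \<in> Cset T k R"
proof -
  have "lend T R r \<in> R"
    using onP_in lend_spec(1) assms unfolding rooted_subtree_def by blast
  then show ?thesis
    using Cset_cases[of k R] rooted_subtree_rt[OF assms] by auto
qed

text \<open>Either z = l(P), or z lies in CV(P) and cv_parent_onP applies.\<close>

lemma Cset_child_onP:
  assumes P_sub: "rooted_subtree T P p" and y: "y \<in> P - Cset T k P"
    and z: "z \<in> children T y" "z \<in> Cset T k P"
  shows "has_lc T P y \<and> lc T y = z \<and> (\<exists>s. onP T P s y \<and> (s = p \<or> (s \<noteq> root T \<and> parent T s \<in> Cset T k P)))"
proof -
  define d where "d = real (card P) / real k"
  have Pv: "P \<subseteq> verts T"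
    using P_sub unfolding rooted_subtree_def by blast
  have zy: "z \<noteq> root T" "parent T z = y" "z \<in> verts T"
    using z(1) in_children_iff by auto
  have C: "Cset T k P = {x. cv T d P x} \<union> {lend T P p, p}"
    using Cset_cases[of k P] y rooted_subtree_rt[OF P_sub] unfolding d_def by blast
  have "z \<noteq> p"
    using P_sub y not_anc_parent[OF zy(3,1)] zy(2) unfolding rooted_subtree_def by blast
  show ?thesis
  proof (cases "z = lend T P p")
    case True
    have "onP T P p z"
      using lend_spec(1)[OF Pv] P_sub True unfolding rooted_subtree_def by simp
    then obtain q where q: "onP T P p q" "has_lc T P q" "z = lc T q"
      using onP_prev \<open>z \<noteq> p\<close> by blast
    have "q \<in> verts T"
      using onP_in[OF q(1)] Pv by blast
    then have "q = y"
      using lc_child[OF q(2)] q(3) zy(2) by simp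
    then show ?thesis
      using q by blast
  next
    case False
    then have "cv T d P z"
      using C z(2) \<open>z \<noteq> p\<close> by blast
    moreover have "\<not> cv T d P (parent T z)"
      using C y zy(2) by blast
    ultimately have "has_lc T P y \<and> lc T y = z \<and>
        (\<exists>s. onP T P s y \<and> (s = p \<or> (s \<noteq> root T \<and> cv T d P (parent T s))))"
      using cv_parent_onP[OF _ P_sub zy(1)] y zy(2) by blast
    then show ?thesis
      using C by blast
  qed
qed

lemma onP_enters_comp_at_root:
  assumes P_sub: "rooted_subtree T P p" and R_sub: "rooted_subtree T R r"
    and RP: "R \<subseteq> P - Cset T k P" and yR: "y \<in> R"
    and s: "onP T P s y" "s = p \<or> (s \<noteq> root T \<and> parent T s \<in> Cset T k P)"
  shows "onP T R r y"
proof -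
  have Pv: "P \<subseteq> verts T"
    using P_sub unfolding rooted_subtree_def by blast
  have sy: "anc T s y" and ry: "anc T r y"
    using onP_anc[OF s(1) Pv] R_sub yR unfolding rooted_subtree_def by blast+
  have "s \<notin> R \<or> s = r"
  proof (rule ccontr)
    assume "\<not> (s \<notin> R \<or> s = r)"
    then have "s \<in> R" "parent T s \<in> R" "s \<noteq> root T"
      using R_sub anc_root_eq unfolding rooted_subtree_def by blast+
    then show False
      using s(2) RP rt_in_Cset[OF P_sub] by blast
  qed
  then have "anc T s r"
    using anc_linear[OF sy ry] rooted_subtree_convex[OF R_sub _ sy yR] anc_refl[of s T] sy anc_in_verts
    by blast
  then show ?thesis
    using onP_suffix[OF s(1) Pv _ ry] rooted_subtree_convex[OF R_sub _ _ yR] by blast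
qed

text \<open>In a component R of P - C_P an edge y z leaving R must be a leftmost edge into C_P, and
  the leftmost path through y enters R at its root; hence y = l(R).\<close>

lemma canon_exit_in_Cset:
  "canon T k R \<Longrightarrow> y \<in> R \<Longrightarrow> z \<in> children T y \<Longrightarrow> z \<notin> R \<Longrightarrow> y \<in> Cset T k R"
proof (induction arbitrary: y z rule: canon.induct)
  case canon_T
  then show ?case
    using in_children_iff by blast
next
  case (canon_comp P x)
  define R where "R = comp T (P - Cset T k P) x"
  obtain p where P_sub: "rooted_subtree T P p"
    using canon_rooted_subtree[OF canon_comp.hyps(1)] by blast
  obtain r where R_sub: "rooted_subtree T R r"
    using canon_rooted_subtree canon.canon_comp[OF canon_comp.hyps] unfolding R_def by blast
  have RP: "R \<subseteq> P - Cset T k P"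
    unfolding R_def using comp_subset canon_comp.hyps(2) by blast
  have yR: "y \<in> R" and zR: "z \<notin> R"
    using canon_comp.prems unfolding R_def by auto
  have yP: "y \<in> P - Cset T k P"
    using yR RP by blast
  have zP: "z \<in> P"
    using canon_comp.IH yP canon_comp.prems(2) by blast
  have zC: "z \<in> Cset T k P"
  proof (rule ccontr)
    assume "z \<notin> Cset T k P"
    moreover have "tadj T y z"
      unfolding tadj_def using canon_comp.prems(2) yP P_sub in_children_iff
      unfolding rooted_subtree_def by blast
    ultimately have "z \<in> R"
      using comp_step[OF yR[unfolded R_def]] yP zP unfolding R_def by blast
    then show False
      using zR by blast
  qed
  obtain s where s: "onP T P s y" "s = p \<or> (s \<noteq> root T \<and> parent T s \<in> Cset T k P)"
    and lc_y: "lc T y = z"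
    using Cset_child_onP[OF P_sub yP canon_comp.prems(2) zC] by blast
  have "onP T R r y"
    using onP_enters_comp_at_root[OF P_sub R_sub RP yR s] .
  moreover have "\<not> has_lc T R y"
    using lc_y zR unfolding has_lc_def by blast
  moreover have "R \<subseteq> verts T"
    using RP P_sub unfolding rooted_subtree_def by blast
  ultimately have "lend T R r = y"
    using lend_eq by blast
  then show ?case
    using lend_in_Cset[OF R_sub] unfolding R_def by simp
qed

text \<open>T^c is the smallest canonical subtree containing B and c: otherwise the component of c
  in S - C_S would be a smaller one.\<close>

lemma card_Tof_exit:
  assumes "canon T k B" "x \<in> B" "c \<notin> B" "tadj T x c" "k > 0"
  shows "real k * real (card B) < real (card (Tof T k c))"
proof -
  have cv: "c \<in> verts T"
    using assms(4) unfolding tadj_def by blast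
  obtain S where S: "canon T k S" "B \<subseteq> S" "c \<in> S"
    and S_min: "\<And>S'. canon T k S' \<Longrightarrow> B \<subseteq> S' \<Longrightarrow> c \<in> S' \<Longrightarrow> card S \<le> card S'"
    using ex_has_least_nat[of "\<lambda>S. canon T k S \<and> B \<subseteq> S \<and> c \<in> S" "verts T" card]
      canon_T canon_subset_verts[OF assms(1)] cv by blast
  have BS: "B \<subseteq> S - Cset T k S"
    using canon_nested_or_disjoint[OF assms(1) S(1)] S(2,3) assms(2,3) unfolding nested_or_disjoint_def by blast
  have "c \<in> Cset T k S"
  proof (rule ccontr)
    assume "c \<notin> Cset T k S"
    then have cS: "c \<in> S - Cset T k S"
      using S(3) by blast
    define K where "K = comp T (S - Cset T k S) c"
    have "x \<in> K"
      unfolding K_def using comp_step[OF comp_refl cS] BS assms(2) tadj_sym[OF assms(4)] by blast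
    moreover obtain b where "rooted_subtree T B b"
      using canon_rooted_subtree[OF assms(1)] by blast
    ultimately have "B \<subseteq> K"
      using rooted_subtree_subset_comp BS assms(2) unfolding K_def by blast
    moreover have "canon T k K" "K \<subset> S"
      unfolding K_def using S(1) cS canon_comp_psubset by (blast intro: canon_comp)+
    moreover have "c \<in> K"
      unfolding K_def by (rule comp_refl)
    moreover have "finite S"
      using canon_subset_verts[OF S(1)] finite_subset_verts by blast
    ultimately show False
      using S_min psubset_card_mono by (meson leD)
  qed
  then have "Tof T k c = S"
    using Tof_eq[OF S(1)] by blast
  moreover have "B \<subset> S"
    using S(2,3) assms(3) by blast
  ultimately show ?thesis
    using canon_psubset_card[OF S(1) assms(1) _ assms(5)] by simp
qed

end

section \<open>One step of the routing algorithm\<close>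

definition route_next :: "rtree \<Rightarrow> nat \<Rightarrow> nat \<Rightarrow> nat \<Rightarrow> nat" where
  "route_next T k v w = snd (route_step T k v w)"

lemma route_pos_eq: "route_pos T k u v i = (route_next T k v ^^ i) u"
  unfolding route_pos_def route_next_def by (simp add: comp_def[symmetric] fun_eq_iff)

lemma route_next_Gadj: "w \<noteq> v \<Longrightarrow> Gadj T k w v \<Longrightarrow> route_next T k v w = v"
  unfolding route_next_def route_step_def by simp

definition route_progress :: "rtree \<Rightarrow> nat \<Rightarrow> nat \<Rightarrow> nat \<Rightarrow> nat \<Rightarrow> bool" where
  "route_progress T k v w w' \<longleftrightarrow>
     (v \<in> Tof T k w \<longrightarrow> v \<in> Tof T k w' \<and> real k * real (card (Tof T k w')) < real (card (Tof T k w))) \<and>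
     (v \<notin> Tof T k w \<longrightarrow> real k * real (card (Tof T k w)) < real (card (Tof T k w')))"

lemma step_cost_le: "step_cost T k v w \<le> 2"
  unfolding step_cost_def by (simp split: prod.split)

context lc_tree
begin

lemma anc_path_exit:
  "anc T c v \<Longrightarrow> c \<in> B \<Longrightarrow> v \<notin> B
    \<Longrightarrow> \<exists>p z. p \<in> B \<and> z \<notin> B \<and> z \<in> children T p \<and> anc T c p \<and> anc T z v"
proof (induction rule: anc.induct)
  case (anc_step w x)
  show ?case
  proof (cases "parent T w \<in> B")
    case True
    then show ?thesis
      using anc_step by (auto simp: in_children_iff intro: anc.intros)
  next
    case False
    then show ?thesis
      using anc_step by (meson anc.anc_step)
  qed
qed simp

lemma Tof_comp:
  assumes "canon T k B" "y \<in> B - Cset T k B" "y \<in> Cset T k (comp T (B - Cset T k B) y)" "k > 0"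
  shows "Tof T k y = comp T (B - Cset T k B) y"
    "real k * real (card (Tof T k y)) < real (card B)"
proof -
  have K: "canon T k (comp T (B - Cset T k B) y)"
    using canon_comp[OF assms(1,2)] .
  then show eq: "Tof T k y = comp T (B - Cset T k B) y"
    using Tof_eq assms(3) by blast
  show "real k * real (card (Tof T k y)) < real (card B)"
    unfolding eq using canon_psubset_card[OF assms(1) K canon_comp_psubset[OF assms(1,2)] assms(4)] .
qed

lemma route_down_step:
  assumes "w \<in> verts T" "anc T w v" "w \<noteq> v" "\<not> Gadj T k w v"
  obtains x c where "x \<in> Cset T k (Tof T k w)" "anc T x v" "x \<noteq> v"
    "\<And>y. y \<in> Cset T k (Tof T k w) \<Longrightarrow> anc T y v \<Longrightarrow> anc T y x"
    "c \<in> children T x" "anc T c v" "route_next T k v w = c"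
proof -
  define C where "C = Cset T k (Tof T k w)"
  define X where "X = {x \<in> C. anc T x v}"
  have "C \<subseteq> verts T"
    unfolding C_def using Tof_spec(1)[OF assms(1)] canon_Cset_subset canon_subset_verts by blast
  then have "finite X"
    unfolding X_def using finite_subset_verts by auto
  moreover have "w \<in> X"
    unfolding X_def C_def using Tof_spec(2)[OF assms(1)] assms(2) by blast
  moreover have "anc T a b \<or> anc T b a" if "a \<in> X" "b \<in> X" for a b
    using that anc_linear unfolding X_def by blast
  ultimately obtain x where x: "x \<in> X" "\<And>y. y \<in> X \<Longrightarrow> anc T y x"
    using chain_deepest by blast
  have "x \<noteq> v"
    using x(1) \<open>w \<in> X\<close> assms(3,4) Tof_spec(1)[OF assms(1)] unfolding X_def C_def Gadj_def by blast
  moreover obtain c where c: "c \<in> children T x" "anc T c v"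
    using ex_child_anc x(1) calculation unfolding X_def by blast
  moreover have "route_next T k v w = c"
    using assms(2-4) deepest_eq[OF x] child_toward_eq[OF c]
    unfolding route_next_def route_step_def Let_def X_def C_def by simp
  ultimately show ?thesis
    using that x unfolding X_def C_def by blast
qed

lemma below_deepest_Cset:
  assumes "canon T k B" "x \<in> Cset T k B" "\<And>y. y \<in> Cset T k B \<Longrightarrow> anc T y v \<Longrightarrow> anc T y x"
    "v \<in> B" "anc T x p" "x \<noteq> p" "anc T p v"
  shows "p \<in> B - Cset T k B"
proof
  obtain b where B_sub: "rooted_subtree T B b"
    using canon_rooted_subtree[OF assms(1)] by blast
  have "x \<in> B"
    using assms(1,2) canon_Cset_subset by blast
  then have "anc T b p"
    using B_sub anc_trans[OF _ assms(5)] unfolding rooted_subtree_def by blast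
  then show "p \<in> B"
    using rooted_subtree_convex[OF B_sub _ assms(7,4)] by blast
  show "p \<notin> Cset T k B"
    using assms(3)[of p] assms(5-7) anc_antisym by blast
qed

lemma above_highest_Cset:
  assumes "canon T k B" "x \<in> Cset T k B" "anc T x w"
    "\<And>y. y \<in> Cset T k B \<Longrightarrow> anc T v y \<Longrightarrow> anc T y w \<Longrightarrow> anc T x y"
    "v \<in> B" "anc T v q" "anc T q x" "q \<noteq> x"
  shows "q \<in> B - Cset T k B"
proof
  obtain b where B_sub: "rooted_subtree T B b"
    using canon_rooted_subtree[OF assms(1)] by blast
  have "anc T b q"
    using B_sub assms(5) anc_trans[OF _ assms(6)] unfolding rooted_subtree_def by blast
  moreover have "x \<in> B"
    using assms(1,2) canon_Cset_subset by blast
  ultimately show "q \<in> B"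
    using rooted_subtree_convex[OF B_sub _ assms(7)] by blast
  show "q \<notin> Cset T k B"
    using assms(4)[of q] assms(6-8) anc_trans[OF assms(7,3)] anc_antisym by blast
qed

lemma route_down_inside:
  assumes "canon T k B" "x \<in> Cset T k B" "\<And>y. y \<in> Cset T k B \<Longrightarrow> anc T y v \<Longrightarrow> anc T y x"
    "c \<in> children T x" "anc T c v" "v \<in> B" "k > 0"
  shows "v \<in> Tof T k c" "real k * real (card (Tof T k c)) < real (card B)"
proof -
  have cx: "parent T c = x" "c \<in> verts T" "c \<noteq> root T"
    using assms(4) in_children_iff by auto
  then have cx: "parent T c = x" "c \<noteq> x" "anc T x c"
    using parent_neq[OF cx(2,3)] anc_parent[OF cx(2,3)] by auto
  have between: "p \<in> B - Cset T k B" if "anc T c p" "anc T p v" for p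
  proof (rule below_deepest_Cset[OF assms(1-3,6) anc_trans[OF cx(3) that(1)] _ that(2)])
    show "x \<noteq> p"
      using that(1) cx(2,3) anc_antisym by blast
  qed
  define K where "K = comp T (B - Cset T k B) c"
  have cBC: "c \<in> B - Cset T k B"
    using between[OF anc_refl assms(5)] anc_in_verts[OF assms(5)] by blast
  have vK: "v \<in> K"
    unfolding K_def using path_in_comp[OF assms(5)] between by blast
  obtain r where K_sub: "rooted_subtree T K r"
    using canon_rooted_subtree[OF canon_comp[OF assms(1) cBC]] unfolding K_def by blast
  have "r = c"
  proof (rule ccontr)
    assume "r \<noteq> c"
    then have "x \<in> K"
      using K_sub comp_refl cx(1) unfolding K_def rooted_subtree_def by metis
    then show False
      using comp_subset[OF cBC] assms(2) unfolding K_def by blast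
  qed
  then have "c \<in> Cset T k K"
    using rt_in_Cset[OF K_sub] by simp
  then show "v \<in> Tof T k c" "real k * real (card (Tof T k c)) < real (card B)"
    using Tof_comp[OF assms(1) cBC _ assms(7)] vK unfolding K_def by auto
qed

lemma route_down_outside:
  assumes "canon T k B" "x \<in> Cset T k B" "anc T x v" "\<And>y. y \<in> Cset T k B \<Longrightarrow> anc T y v \<Longrightarrow> anc T y x"
    "c \<in> children T x" "anc T c v" "v \<notin> B" "k > 0"
  shows "real k * real (card B) < real (card (Tof T k c))"
proof -
  have c: "parent T c = x" "c \<in> verts T" "c \<noteq> root T"
    using assms(5) in_children_iff by auto
  then have cx: "c \<noteq> x" "anc T x c"
    using parent_neq[OF c(2,3)] anc_parent[OF c(2,3)] by auto
  have xB: "x \<in> B"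
    using assms(1,2) canon_Cset_subset by blast
  have "c \<notin> B"
  proof
    assume "c \<in> B"
    then obtain p z where pz: "p \<in> B" "z \<notin> B" "z \<in> children T p" "anc T c p" "anc T z v"
      using anc_path_exit[OF assms(6) _ assms(7)] by blast
    have "p \<in> Cset T k B"
      using canon_exit_in_Cset[OF assms(1) pz(1,3,2)] .
    moreover have "anc T p v"
      using pz(3,5) anc_trans anc_parent in_children_iff by metis
    ultimately have "anc T p x"
      using assms(4) by blast
    then have "p = x"
      using anc_antisym anc_trans[OF cx(2) pz(4)] by blast
    then show False
      using pz(4) cx anc_antisym by blast
  qed
  moreover have "tadj T x c"
    unfolding tadj_def using c xB canon_subset_verts[OF assms(1)] by blast
  ultimately show ?thesis
    using card_Tof_exit[OF assms(1) xB _ _ assms(8)] by blast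
qed


lemma route_up_step:
  assumes "w \<in> verts T" "anc T v w" "w \<noteq> v" "\<not> Gadj T k w v"
  obtains x where "x \<in> Cset T k (Tof T k w)" "anc T v x" "anc T x w" "x \<noteq> v"
    "\<And>y. y \<in> Cset T k (Tof T k w) \<Longrightarrow> anc T v y \<Longrightarrow> anc T y w \<Longrightarrow> anc T x y"
    "route_next T k v w = parent T x"
proof -
  define C where "C = Cset T k (Tof T k w)"
  define X where "X = {x \<in> C. anc T v x \<and> anc T x w}"
  have "w \<in> X"
    unfolding X_def C_def using Tof_spec(2)[OF assms(1)] assms(1,2) anc_refl by blast
  moreover have "anc T a b \<or> anc T b a" if "a \<in> X" "b \<in> X" for a b
    using that anc_linear unfolding X_def by blast
  ultimately obtain x where x: "x \<in> X" "\<And>y. y \<in> X \<Longrightarrow> anc T x y"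
    using chain_highest by blast
  have "x \<noteq> v"
    using x(1) \<open>w \<in> X\<close> assms(3,4) Tof_spec(1)[OF assms(1)] unfolding X_def C_def Gadj_def by blast
  moreover have "\<not> anc T w v"
    using assms(2,3) anc_antisym by blast
  then have "route_next T k v w = parent T x"
    using assms(2-4) highest_eq[OF x]
    unfolding route_next_def route_step_def Let_def X_def C_def by simp
  ultimately show ?thesis
    using that x unfolding X_def C_def by blast
qed

lemma route_up_inside:
  assumes "canon T k B" "x \<in> Cset T k B" "anc T v x" "anc T x w" "x \<noteq> v"
    "\<And>y. y \<in> Cset T k B \<Longrightarrow> anc T v y \<Longrightarrow> anc T y w \<Longrightarrow> anc T x y"
    "v \<in> B" "k > 0"
  shows "v \<in> Tof T k (parent T x)" "real k * real (card (Tof T k (parent T x))) < real (card B)"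
proof -
  define p where "p = parent T x"
  have xB: "x \<in> B"
    using assms(1,2) canon_Cset_subset by blast
  have x: "x \<noteq> root T" "anc T v p" "x \<in> verts T"
    using anc_properD[OF assms(3) assms(5)[symmetric]] xB canon_subset_verts[OF assms(1)]
    unfolding p_def by auto
  have px: "anc T p x" "p \<noteq> x" "x \<in> children T p"
    using anc_parent[OF x(3,1)] parent_neq[OF x(3,1)] x(1,3) in_children_iff unfolding p_def by auto
  have between: "q \<in> B - Cset T k B" if "anc T v q" "anc T q p" for q
  proof (rule above_highest_Cset[OF assms(1,2,4,6,7) that(1) anc_trans[OF that(2) px(1)]])
    show "q \<noteq> x"
      using that(2) px(1,2) anc_antisym by blast
  qed
  define K where "K = comp T (B - Cset T k B) p"
  have pBC: "p \<in> B - Cset T k B"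
    using between[OF x(2) anc_refl] anc_in_verts[OF x(2)] by blast
  have "v \<in> K"
    unfolding K_def using comp_sym[OF path_in_comp[OF x(2)]] between by blast
  moreover have "p \<in> Cset T k K"
  proof (rule canon_exit_in_Cset)
    show "canon T k K"
      unfolding K_def using canon_comp[OF assms(1) pBC] .
    show "p \<in> K"
      unfolding K_def by (rule comp_refl)
    show "x \<notin> K"
      using comp_subset[OF pBC] assms(2) unfolding K_def by blast
  qed (rule px(3))
  ultimately show "v \<in> Tof T k (parent T x)"
    "real k * real (card (Tof T k (parent T x))) < real (card B)"
    using Tof_comp[OF assms(1) pBC _ assms(8)] unfolding K_def p_def by auto
qed

lemma route_up_outside:
  assumes "canon T k B" "x \<in> Cset T k B" "anc T v x" "anc T x w" "x \<noteq> v" "w \<in> B"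
    "\<And>y. y \<in> Cset T k B \<Longrightarrow> anc T v y \<Longrightarrow> anc T y w \<Longrightarrow> anc T x y"
    "v \<notin> B" "k > 0"
  shows "real k * real (card B) < real (card (Tof T k (parent T x)))"
proof -
  obtain b where B_sub: "rooted_subtree T B b"
    using canon_rooted_subtree[OF assms(1)] by blast
  have xB: "x \<in> B"
    using assms(1,2) canon_Cset_subset by blast
  have bw: "anc T b w"
    using B_sub assms(6) unfolding rooted_subtree_def by blast
  have "\<not> anc T b v"
    using rooted_subtree_convex[OF B_sub _ anc_trans[OF assms(3,4)] assms(6)] assms(8) by blast
  then have "anc T v b"
    using anc_linear[OF anc_trans[OF assms(3,4)] bw] by blast
  then have "anc T x b"
    using assms(7) rt_in_Cset[OF B_sub] bw by blast
  then have xb: "x = b"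
    using anc_antisym B_sub xB unfolding rooted_subtree_def by blast
  have x: "x \<noteq> root T" "x \<in> verts T"
    using anc_properD[OF assms(3) assms(5)[symmetric]] xB canon_subset_verts[OF assms(1)] by auto
  have "parent T x \<notin> B"
  proof
    assume "parent T x \<in> B"
    then have "anc T x (parent T x)"
      using B_sub xb unfolding rooted_subtree_def by blast
    then show False
      using not_anc_parent[OF x(2,1)] by blast
  qed
  moreover have "tadj T x (parent T x)"
    unfolding tadj_def using x parent_in_verts by blast
  ultimately show ?thesis
    using card_Tof_exit[OF assms(1) xB _ _ assms(9)] by blast
qed

lemma route_down:
  assumes "w \<in> verts T" "anc T w v" "w \<noteq> v" "\<not> Gadj T k w v" "k > 0"
  shows "anc T (route_next T k v w) v" "route_progress T k v w (route_next T k v w)"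
proof -
  obtain x c where x: "x \<in> Cset T k (Tof T k w)" "anc T x v"
    "\<And>y. y \<in> Cset T k (Tof T k w) \<Longrightarrow> anc T y v \<Longrightarrow> anc T y x"
    and c: "c \<in> children T x" "anc T c v" "route_next T k v w = c"
    using route_down_step[OF assms(1-4)] by metis
  note B = Tof_spec(1)[OF assms(1), of k]
  show "anc T (route_next T k v w) v"
    using c by simp
  show "route_progress T k v w (route_next T k v w)"
    unfolding route_progress_def c(3)
    using route_down_inside[OF B x(1) _ c(1,2) _ assms(5)] route_down_outside[OF B x(1,2) _ c(1,2) _ assms(5)] x(3)
    by blast
qed

lemma route_up:
  assumes "w \<in> verts T" "anc T v w" "w \<noteq> v" "\<not> Gadj T k w v" "k > 0"
  shows "anc T v (route_next T k v w)" "route_next T k v w \<in> verts T"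
    "route_progress T k v w (route_next T k v w)"
proof -
  obtain x where x: "x \<in> Cset T k (Tof T k w)" "anc T v x" "anc T x w" "x \<noteq> v"
    "\<And>y. y \<in> Cset T k (Tof T k w) \<Longrightarrow> anc T v y \<Longrightarrow> anc T y w \<Longrightarrow> anc T x y"
    and step: "route_next T k v w = parent T x"
    using route_up_step[OF assms(1-4)] by metis
  note B = Tof_spec[OF assms(1), of k]
  have wB: "w \<in> Tof T k w"
    using canon_Cset_subset[OF B(1)] B(2) by blast
  show "anc T v (route_next T k v w)" "route_next T k v w \<in> verts T"
    unfolding step using anc_properD[OF x(2) x(4)[symmetric]] parent_in_verts anc_in_verts[OF x(2)] by auto
  show "route_progress T k v w (route_next T k v w)"
    unfolding route_progress_def step
    using route_up_inside[OF B(1) x(1-4) _ _ assms(5)] route_up_outside[OF B(1) x(1-4) wB _ _ assms(5)] x(5)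
    by blast
qed

lemma route_next_cases:
  assumes "w \<in> verts T" "anc T w v \<or> anc T v w" "w \<noteq> v" "k > 0"
  shows "route_next T k v w = v \<or> (route_next T k v w \<in> verts T \<and>
    (anc T (route_next T k v w) v \<or> anc T v (route_next T k v w)) \<and> route_progress T k v w (route_next T k v w))"
proof (cases "Gadj T k w v")
  case True
  then show ?thesis
    using route_next_Gadj assms(3) by blast
next
  case False
  then show ?thesis
    using assms route_down[OF assms(1) _ assms(3) False assms(4)] route_up[OF assms(1) _ assms(3) False assms(4)]
      anc_in_verts by blast
qed

end

section \<open>Number of steps\<close>

lemma funpow_reaches_by_potential:
  fixes f :: "'a \<Rightarrow> 'a" and \<Phi> :: "'a \<Rightarrow> real"
  assumes "q > 1"
    and step: "\<And>w. P w \<Longrightarrow> w \<noteq> t \<Longrightarrow> f w = t \<or> (P (f w) \<and> q * \<Phi> (f w) \<le> \<Phi> w)"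
    and lower: "\<And>w. P w \<Longrightarrow> w \<noteq> t \<Longrightarrow> q \<le> \<Phi> w"
    and "P w" "w \<noteq> t"
  shows "\<exists>N. (f ^^ N) w = t \<and> q ^ N \<le> \<Phi> w"
proof -
  obtain m where "\<Phi> w < q ^ m"
    using real_arch_pow[OF assms(1)] by blast
  then show ?thesis
    using assms(4,5)
  proof (induction m arbitrary: w)
    case 0
    then show ?case
      using lower assms(1) by fastforce
  next
    case (Suc m)
    consider "f w = t" | "f w \<noteq> t" "P (f w)" "q * \<Phi> (f w) \<le> \<Phi> w"
      using step Suc.prems(2,3) by blast
    then show ?case
    proof cases
      case 1
      then show ?thesis
        using lower Suc.prems(2,3) by (intro exI[of _ 1]) simp
    next
      case 2
      have "q * \<Phi> (f w) < q * q ^ m"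
        using 2(3) Suc.prems(1) by simp
      then have "\<Phi> (f w) < q ^ m"
        using assms(1) by simp
      then obtain N where N: "(f ^^ N) (f w) = t" "q ^ N \<le> \<Phi> (f w)"
        using Suc.IH 2 by blast
      have "(f ^^ Suc N) w = t"
        using N(1) by (simp add: funpow_Suc_right del: funpow.simps)
      moreover have "q * q ^ N \<le> q * \<Phi> (f w)"
        using N(2) assms(1) by simp
      then have "q ^ Suc N \<le> \<Phi> w"
        using 2(3) by simp
      ultimately show ?thesis
        by blast
    qed
  qed
qed

lemma steps_le_log:
  fixes k n :: real
  assumes "1 < k" "2 \<le> n" "k ^ N \<le> (k * n)\<^sup>2"
  shows "2 * real N \<le> (4 / ln 2 + 4 / ln k) * ln n"
proof -
  have "ln (k ^ N) \<le> ln ((k * n)\<^sup>2)"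
    using assms by simp
  then have "real N * ln k \<le> 2 * (ln k + ln n)"
    using assms(1,2) by (simp add: ln_realpow ln_mult)
  then have "real N \<le> 2 + 2 * ln n / ln k"
    using assms(1) by (simp add: field_simps)
  moreover have "4 \<le> 4 * ln n / ln 2"
    using assms(2) by (simp add: field_simps)
  ultimately have "2 * real N \<le> 4 * ln n / ln 2 + 4 * ln n / ln k"
    by linarith
  then show ?thesis
    by (simp add: field_simps)
qed

text \<open>While v is outside T^w the size of T^w grows by a factor k, afterwards it shrinks by a
  factor k; the potential decreases by a factor k in both phases and at the switch.\<close>

definition route_potential :: "rtree \<Rightarrow> nat \<Rightarrow> nat \<Rightarrow> nat \<Rightarrow> real" where
  "route_potential T k v w =
     (if v \<in> Tof T k w then real k * real (card (Tof T k w))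
      else (real k * real (card (verts T)))\<^sup>2 / real (card (Tof T k w)))"

context lc_tree
begin

lemma route_potential_bounds:
  assumes "w \<in> verts T" "k > 0"
  shows "real k \<le> route_potential T k v w" "route_potential T k v w \<le> (real k * real (card (verts T)))\<^sup>2"
proof -
  define n where "n = real (card (verts T))"
  define s where "s = real (card (Tof T k w))"
  have s: "1 \<le> s" "s \<le> n"
    unfolding s_def n_def using card_Tof_pos[OF assms(1), of k] card_Tof_le[OF assms(1), of k] by auto
  have k: "1 \<le> real k"
    using assms(2) by simp
  have X: "real k * s \<le> (real k * n)\<^sup>2"
  proof -
    have "real k * s \<le> real k * n"
      using s(2) by (simp add: mult_left_mono)
    also have "\<dots> \<le> (real k * n) ^ 2"
      using power_increasing[of 1 2 "real k * n"] mult_mono[OF k order_trans[OF s]] by simp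
    finally show ?thesis .
  qed
  have "real k \<le> real k * s"
    using s(1) k by simp
  moreover have "real k \<le> (real k * n)\<^sup>2 / s" "(real k * n)\<^sup>2 / s \<le> (real k * n)\<^sup>2"
    using X s(1) by (simp_all add: pos_le_divide_eq pos_divide_le_eq mult_le_cancel_left1)
  ultimately show "real k \<le> route_potential T k v w" "route_potential T k v w \<le> (real k * n)\<^sup>2"
    using X unfolding route_potential_def s_def n_def by auto
qed

lemma route_potential_step:
  assumes "w \<in> verts T" "w' \<in> verts T" "k > 0" "route_progress T k v w w'"
  shows "real k * route_potential T k v w' \<le> route_potential T k v w"
proof -
  define n where "n = real (card (verts T))"
  define s where "s = real (card (Tof T k w))"
  define s' where "s' = real (card (Tof T k w'))"
  have pos: "0 < s" "0 < s'" and le: "s \<le> n" "s' \<le> n"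
    unfolding s_def s'_def n_def using card_Tof_pos assms(1,2) card_Tof_le by auto
  have k: "0 < real k"
    using assms(3) by simp
  consider "v \<in> Tof T k w" | "v \<notin> Tof T k w" "v \<in> Tof T k w'" | "v \<notin> Tof T k w" "v \<notin> Tof T k w'"
    by blast
  then show ?thesis
  proof cases
    case 1
    then show ?thesis
      using assms(4) k unfolding route_potential_def route_progress_def by simp
  next
    case 2
    have "s' * s \<le> n * n"
      by (rule mult_mono[OF le(2) le(1)]) (use pos le in auto)
    then have "real k * (real k * s') * s \<le> (real k * n)\<^sup>2"
      using k by (simp add: power2_eq_square algebra_simps)
    then show ?thesis
      using 2 pos unfolding route_potential_def s_def s'_def n_def by (simp add: field_simps)
  next
    case 3
    have "real k * s \<le> s'"
      using assms(4) 3(1) unfolding route_progress_def s_def s'_def by simp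
    then have "real k * (real k * n)\<^sup>2 * s \<le> (real k * n)\<^sup>2 * s'"
      using mult_right_mono[of "real k * s" s' "(real k * n)\<^sup>2"] by (simp add: algebra_simps)
    then show ?thesis
      using 3 pos unfolding route_potential_def s_def s'_def n_def by (simp add: field_simps)
  qed
qed

lemma route_reaches:
  assumes "1 < k" "u \<in> verts T" "v \<in> verts T" "anc T u v \<or> anc T v u" "u \<noteq> v"
  shows "\<exists>N. (route_next T k v ^^ N) u = v \<and> real k ^ N \<le> (real k * real (card (verts T)))\<^sup>2"
proof -
  let ?P = "\<lambda>w. w \<in> verts T \<and> (anc T w v \<or> anc T v w)"
  have k: "k > 0" "real k > 1"
    using assms(1) by simp_all
  have step: "route_next T k v w = v \<or> (?P (route_next T k v w) \<and>
      real k * route_potential T k v (route_next T k v w) \<le> route_potential T k v w)"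
    if w: "w \<in> verts T" "anc T w v \<or> anc T v w" "w \<noteq> v" for w
    using route_next_cases[OF w k(1)] route_potential_step[OF w(1) _ k(1)] by blast
  obtain N where "(route_next T k v ^^ N) u = v" "real k ^ N \<le> route_potential T k v u"
    using funpow_reaches_by_potential[of "real k" ?P v "route_next T k v" "route_potential T k v", OF k(2)]
      step route_potential_bounds(1)[OF _ k(1)] assms(2,4,5) by blast
  then show ?thesis
    using route_potential_bounds(2)[OF assms(2) k(1)] order_trans by blast
qed

lemma route_cost_le_log:
  assumes k: "1 < k" and uv: "u \<in> verts T" "v \<in> verts T" "anc T u v \<or> anc T v u"
  shows "\<exists>N. route_pos T k u v N = v \<and>
    real (\<Sum>i<N. step_cost T k v (route_pos T k u v i)) \<le> (4 / ln 2 + 4 / ln (real k)) * ln (real (card (verts T)))"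
proof (cases "u = v")
  case True
  have "0 < card (verts T)"
    using uv finite_verts card_gt_0_iff by blast
  moreover have "0 \<le> 4 / ln 2 + 4 / ln (real k)"
    using k by simp
  ultimately show ?thesis
    using True by (intro exI[of _ 0]) (simp add: route_pos_def)
next
  case False
  define n where "n = real (card (verts T))"
  have "card {u, v} \<le> card (verts T)"
    using card_mono[OF finite_verts, of "{u, v}"] uv by simp
  then have "2 \<le> n"
    using False unfolding n_def by simp
  moreover obtain N where "(route_next T k v ^^ N) u = v" "real k ^ N \<le> (real k * n)\<^sup>2"
    using route_reaches[OF k uv False] unfolding n_def by blast
  ultimately have "route_pos T k u v N = v" "2 * real N \<le> (4 / ln 2 + 4 / ln (real k)) * ln n"
    using steps_le_log[of "real k" n N] k by (simp_all add: route_pos_eq)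
  moreover have "(\<Sum>i<N. step_cost T k v (route_pos T k u v i)) \<le> 2 * N"
    using sum_bounded_above[of "{..<N}" "\<lambda>i. step_cost T k v (route_pos T k u v i)" 2] step_cost_le
    by (simp add: mult.commute)
  then have "real (\<Sum>i<N. step_cost T k v (route_pos T k u v i)) \<le> 2 * real N"
    by (metis of_nat_le_iff of_nat_mult of_nat_numeral)
  ultimately show ?thesis
    unfolding n_def by fastforce
qed

end

theorem lemma14:
  shows "\<forall>k::nat. k \<ge> 4 \<longrightarrow> (\<exists>C::real. \<forall>T u v.
     is_tree T \<and> valid_lc T \<and> u \<in> verts T \<and> v \<in> verts T \<and> (anc T u v \<or> anc T v u) \<longrightarrow>
     (\<exists>N. route_pos T k u v N = v \<and>
          real (\<Sum>i<N. step_cost T k v (route_pos T k u v i)) \<le> C * ln (real (card (verts T)))))"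
proof (intro allI impI)
  fix k :: nat
  assume "k \<ge> 4"
  then have "1 < k"
    by simp
  have "lc_tree T" if "is_tree T" "valid_lc T" for T
    using that by unfold_locales
  then show "\<exists>C::real. \<forall>T u v.
     is_tree T \<and> valid_lc T \<and> u \<in> verts T \<and> v \<in> verts T \<and> (anc T u v \<or> anc T v u) \<longrightarrow>
     (\<exists>N. route_pos T k u v N = v \<and>
          real (\<Sum>i<N. step_cost T k v (route_pos T k u v i)) \<le> C * ln (real (card (verts T))))"
    using lc_tree.route_cost_le_log[OF _ \<open>1 < k\<close>] by blast
qed

end
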